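(* Let $\mathcal{B}=\langle V,F,E\rangle$ be a finite bipartite graph and $W\subseteq V$, and let $\mathrm{CO}(\mathcal{B})=\langle\mathcal{V},\mathcal{E}\rangle$ be its causal ordering graph. Let $S_F\subseteq F$ and $S_V\subseteq V\setminus W$ be such that $S_F\cup S_V\in\mathcal{V}$ and $|S_F|=|S_V|=n$ (so that the intervention below is defined), and fix enumerations $S_F=(f_1,\dots,f_n)$, $S_V=(v_1,\dots,v_n)$. Then $\mathrm{CO}(\mathcal{B}_{\mathrm{do}(S_F,S_V)})=\mathrm{CO}(\mathcal{B})_{\mathrm{do}(S_F,S_V)}$.
   Context: $\mathrm{adj}_{\mathcal{B}}(X)$ = set of neighbours of $X$. $F'\subseteq F$ is self-contained if $|F'|=|\mathrm{adj}(F')|$ and $|F''|\le|\mathrm{adj}(F'')|$ for all $F''\subseteq F'$; minimal self-contained = non-empty self-contained with no non-empty strict self-contained subset. For a maximum matching $M$ of a bipartite graph, an alternating path is a sequence of distinct vertices (possibly one) with consecutive vertices adjacent and edges alternating between not in $M$ and in $M$; the coarse decomposition is $T_I$ = vertices joined by an alternating path to an unmatched variable vertex, $T_O$ = vertices joined by an alternating path to an unmatched constraint vertex, $T_C$ = the rest. Causal ordering graph $\mathrm{CO}(\mathcal{B})=\langle\mathcal{V},\mathcal{E}\rangle$ (a partition of $V\cup F$ into clusters, with edges $x\to C$ from vertices to clusters; $\mathrm{cl}(x)$ is the cluster of $x$): let $\mathcal{B}'$ be the subgraph induced by $(V\setminus W)\cup F$, $\langle T_I,T_C,T_O\rangle$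 its coarse decomposition w.r.t. a maximum matching, and $\mathcal{B}_I,\mathcal{B}_C,\mathcal{B}_O$ the induced subgraphs. On $\mathcal{B}_C$: while the current graph $\mathcal{B}''$ is non-null, choose a minimal self-contained set $S'_F$ of $\mathcal{B}''$, form the cluster $C=S'_F\cup\mathrm{adj}_{\mathcal{B}''}(S'_F)$, add edges $v\to C$ for $v\in\mathrm{adj}_{\mathcal{B}_C}(S'_F)\setminus\mathrm{adj}_{\mathcal{B}''}(S'_F)$, and delete $C$. Other clusters: the vertex sets of connected components of $\mathcal{B}_I$ and of $\mathcal{B}_O$, and $\{w\}$ for $w\in W$. Further edges: $v\to\mathrm{cl}(f)$ for each edge $(v-f)\in E$ with $v\in(T_O\cup T_C)\cap V$ and $f\in T_I\cap F$, or with $v\in T_O\cap V$ and $f\in T_C\cap F$; and $w\to\mathrm{cl}(f)$ for every $w\in W$, $f\in\mathrm{adj}_{\mathcal{B}}(w)$. Perfect intervention on a bipartite graph: $\mathcal{B}_{\mathrm{do}(S_F,S_V)}=\langle V,F,E'\rangle$ where $E'$ consists of the edges of $E$ not incident to any $f_i$ together with the edges $(v_i-f_i)$, $i=1,\dots,n$ (vertex labels unchanged). Perfect intervention on the cluster $S=S_F\cup S_V$ of $\mathrm{CO}(\mathcal{B})$: $\mathrm{CO}(\mathcal{B})_{\mathrm{do}(S_F,S_V)}=\langle\mathcal{V}',\mathcal{E}'\rangle$ with $\mathcal{V}'=(\mathcal{V}\setminus\{S\})\cup\{\{v_i,f_i\}:i=1,\dots,n\}$ and $\mathcal{E}'=\{(x\to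 T)\in\mathcal{E}:T\neq S\}$. *)

theory Defs
  imports Main
begin

definition bip :: "'a set \<Rightarrow> 'a set \<Rightarrow> ('a \<times> 'a) set \<Rightarrow> bool" where
  "bip V F E \<longleftrightarrow> finite V \<and> finite F \<and> V \<inter> F = {} \<and> E \<subseteq> V \<times> F"

definition ein :: "('a \<times> 'a) set \<Rightarrow> 'a \<Rightarrow> 'a \<Rightarrow> bool" where
  "ein E x y \<longleftrightarrow> (x, y) \<in> E \<or> (y, x) \<in> E"

definition adj :: "('a \<times> 'a) set \<Rightarrow> 'a set \<Rightarrow> 'a set" where
  "adj E X = {y. \<exists>x\<in>X. ein E x y}"

definition induced :: "('a \<times> 'a) set \<Rightarrow> 'a set \<Rightarrow> ('a \<times> 'a) set" where
  "induced E U = E \<inter> (U \<times> U)"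

definition self_contained :: "('a \<times> 'a) set \<Rightarrow> 'a set \<Rightarrow> 'a set \<Rightarrow> bool" where
  "self_contained Eg Fg X \<longleftrightarrow> X \<subseteq> Fg \<and> card X = card (adj Eg X) \<and>
     (\<forall>Y. Y \<subseteq> X \<longrightarrow> card Y \<le> card (adj Eg Y))"

definition min_self_contained :: "('a \<times> 'a) set \<Rightarrow> 'a set \<Rightarrow> 'a set \<Rightarrow> bool" where
  "min_self_contained Eg Fg X \<longleftrightarrow> X \<noteq> {} \<and> self_contained Eg Fg X \<and>
     \<not> (\<exists>Y. Y \<subset> X \<and> Y \<noteq> {} \<and> self_contained Eg Fg Y)"

definition matching :: "('a \<times> 'a) set \<Rightarrow> ('a \<times> 'a) set \<Rightarrow> bool" where
  "matching E M \<longleftrightarrow> M \<subseteq> E \<and>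
     (\<forall>e1\<in>M. \<forall>e2\<in>M. (fst e1 = fst e2 \<or> snd e1 = snd e2) \<longrightarrow> e1 = e2)"

definition max_matching :: "('a \<times> 'a) set \<Rightarrow> ('a \<times> 'a) set \<Rightarrow> bool" where
  "max_matching E M \<longleftrightarrow> matching E M \<and> (\<forall>M'. matching E M' \<longrightarrow> card M' \<le> card M)"

definition matched :: "('a \<times> 'a) set \<Rightarrow> 'a \<Rightarrow> bool" where
  "matched M x \<longleftrightarrow> (\<exists>e\<in>M. fst e = x \<or> snd e = x)"

definition alt_path :: "('a \<times> 'a) set \<Rightarrow> ('a \<times> 'a) set \<Rightarrow> 'a list \<Rightarrow> bool" where
  "alt_path E M p \<longleftrightarrow> p \<noteq> [] \<and> distinct p \<and>
     (\<forall>i. Suc i < length p \<longrightarrow> ein E (p ! i) (p ! Suc i)) \<and>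
     (\<forall>i. Suc (Suc i) < length p \<longrightarrow>
        (ein M (p ! i) (p ! Suc i) \<longleftrightarrow> \<not> ein M (p ! Suc i) (p ! Suc (Suc i))))"

definition alt_reach :: "'a set \<Rightarrow> 'a set \<Rightarrow> ('a \<times> 'a) set \<Rightarrow> ('a \<times> 'a) set \<Rightarrow> 'a set \<Rightarrow> 'a set" where
  "alt_reach Vg Fg Eg M U = {x \<in> Vg \<union> Fg. \<exists>u\<in>U. \<not> matched M u \<and>
       (\<exists>p. alt_path Eg M p \<and> hd p = u \<and> last p = x)}"

definition components :: "('a \<times> 'a) set \<Rightarrow> 'a set \<Rightarrow> 'a set set" where
  "components Eg U = {{y \<in> U. (x, y) \<in> (induced Eg U \<union> (induced Eg U)\<inverse>)\<^sup>*} | x. x \<in> U}"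

(* The clustering loop on B_C.  co_core EC Fs U cls eds: starting from the current graph
   B'' induced (in B_C, edges EC) by the remaining vertex set U, the algorithm may produce
   the clusters cls and the edges eds. *)
inductive co_core :: "('a \<times> 'a) set \<Rightarrow> 'a set \<Rightarrow> 'a set \<Rightarrow> 'a set set \<Rightarrow> ('a \<times> 'a set) set \<Rightarrow> bool"
  for EC :: "('a \<times> 'a) set" and Fs :: "'a set" where
  co_nil: "co_core EC Fs {} {} {}"
| co_step: "\<lbrakk> U \<noteq> {};
           min_self_contained (induced EC U) (Fs \<inter> U) S;
           C = S \<union> adj (induced EC U) S;
           co_core EC Fs (U - C) cls eds \<rbrakk>
        \<Longrightarrow> co_core EC Fs U (insert C cls)
              ({(v, C) | v. v \<in> adj EC S - adj (induced EC U) S} \<union> eds)"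

(* is_CO V F E W G: G = (clusters, edges) is a causal ordering graph of B = <V,F,E> with
   exogenous variables W (for some choice of maximum matching and of the minimal
   self-contained sets in the loop). *)
definition is_CO :: "'a set \<Rightarrow> 'a set \<Rightarrow> ('a \<times> 'a) set \<Rightarrow> 'a set \<Rightarrow>
                     'a set set \<times> ('a \<times> 'a set) set \<Rightarrow> bool" where
  "is_CO V F E W G \<longleftrightarrow>
    (let V' = V - W; E' = induced E (V' \<union> F) in
     \<exists>M TI TO TC clsC edsC.
       max_matching E' M \<and>
       TI = alt_reach V' F E' M V' \<and>
       TO = alt_reach V' F E' M F \<and>
       TC = (V' \<union> F) - (TI \<union> TO) \<and>
       co_core (induced E TC) F TC clsC edsC \<and>
       fst G = clsC \<union> components E TI \<union> components E TO \<union> {{w} | w. w \<in> W} \<and>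
       snd G = edsC
         \<union> {(v, C) | v f C. (v, f) \<in> E \<and> C \<in> fst G \<and> f \<in> C \<and>
               ((v \<in> (TO \<union> TC) \<inter> V \<and> f \<in> TI \<inter> F) \<or> (v \<in> TO \<inter> V \<and> f \<in> TC \<inter> F))}
         \<union> {(w, C) | w f C. w \<in> W \<and> f \<in> adj E {w} \<and> C \<in> fst G \<and> f \<in> C})"

definition do_bip :: "('a \<times> 'a) set \<Rightarrow> 'a list \<Rightarrow> 'a list \<Rightarrow> ('a \<times> 'a) set" where
  "do_bip E fs vs = {e \<in> E. snd e \<notin> set fs} \<union> {(vs ! i, fs ! i) | i. i < length fs}"

definition do_CO :: "'a set set \<times> ('a \<times> 'a set) set \<Rightarrow> 'a list \<Rightarrow> 'a list \<Rightarrow>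
                     'a set set \<times> ('a \<times> 'a set) set" where
  "do_CO G fs vs =
     ((fst G - {set fs \<union> set vs}) \<union> {{vs ! i, fs ! i} | i. i < length fs},
      {(x, T) \<in> snd G. T \<noteq> set fs \<union> set vs})"

end

(* The cluster S = S_F \<union> S_V lies in the core T_C, since the components of T_I and T_O are
   unbalanced and the remaining clusters are singletons, and a maximum matching M of B' matches
   S_V with S_F.  Trading these edges of M for the new edges v_i - f_i gives a matching of the
   intervened graph of the same size.  The set T_I \<inter> V is the least set Z attaining equality in
   the deficiency bound |M| + |Z| \<le> |adj Z| + |V - W|; the intervention leaves the neighbourhoods of
   its subsets unchanged, so it is the same for both graphs, and dually for T_O.  Hence T_I, T_O and
   T_C do not change.  On T_C the clustering loop is deterministic: T_C is perfectly matched, so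
   Hall's condition holds and distinct minimal self-contained sets are disjoint.  For the intervened
   graph one run first splits off the pairs {v_i, f_i}, whose constraints now have a single
   neighbour, and then repeats the old run without S.  The remaining edges of the causal ordering
   graph only involve constraints outside S_F, whose neighbourhoods are unchanged. *)

theory Submission
  imports Defs
begin

section \<open>Adjacency, matchings and alternating paths\<close>

lemma ein_commute: "ein E x y = ein E y x"
  unfolding ein_def by auto

lemma ein_converse [simp]: "ein (E\<inverse>) x y = ein E x y"
  unfolding ein_def by auto

lemma adj_converse [simp]: "adj (E\<inverse>) X = adj E X"
  unfolding adj_def by simp

lemma matched_iff: "matched M x \<longleftrightarrow> (\<exists>y. (x, y) \<in> M \<or> (y, x) \<in> M)"
  unfolding matched_def by force

lemma matched_converse [simp]: "matched (M\<inverse>) x = matched M x"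
  unfolding matched_iff by blast

lemma ein_imp_matched: "ein M x y \<Longrightarrow> matched M x"
  unfolding ein_def matched_iff by blast

lemma alt_path_converse [simp]: "alt_path (E\<inverse>) (M\<inverse>) p = alt_path E M p"
  unfolding alt_path_def by simp

lemma alt_reach_converse: "alt_reach P Q E M U = alt_reach Q P (E\<inverse>) (M\<inverse>) U"
  unfolding alt_reach_def by auto

lemma matching_iff: "matching E M \<longleftrightarrow> M \<subseteq> E \<and>
   (\<forall>a b c d. (a, b) \<in> M \<longrightarrow> (c, d) \<in> M \<longrightarrow> a = c \<or> b = d \<longrightarrow> a = c \<and> b = d)"
  unfolding matching_def Ball_def by auto

lemma matching_converse: "matching (E\<inverse>) (M\<inverse>) = matching E M"
  unfolding matching_iff converse_iff converse_mono by blast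

lemma max_matching_converse: "max_matching E M \<Longrightarrow> max_matching (E\<inverse>) (M\<inverse>)"
  unfolding max_matching_def by (metis card_inverse converse_converse matching_converse)

lemma ein_induced: "ein (induced E U) x y \<longleftrightarrow> ein E x y \<and> x \<in> U \<and> y \<in> U"
  unfolding ein_def induced_def by auto

lemma adj_induced: "adj (induced E U) X = {y \<in> U. \<exists>x\<in>X \<inter> U. ein E x y}"
  unfolding adj_def ein_induced by auto

lemma adj_Un: "adj E (X \<union> Y) = adj E X \<union> adj E Y"
  unfolding adj_def by auto

lemma adj_empty [simp]: "adj E {} = {}"
  unfolding adj_def by simp

lemma adj_mono: "X \<subseteq> Y \<Longrightarrow> adj E X \<subseteq> adj E Y"
  unfolding adj_def by auto

lemma components_subset: "C \<in> components E U \<Longrightarrow> C \<subseteq> U"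
  unfolding components_def by blast

lemma components_closed:
  assumes "K \<in> components E U" "y \<in> K" "z \<in> U" "ein E y z"
  shows "z \<in> K"
proof -
  obtain x where K: "K = {y \<in> U. (x, y) \<in> (induced E U \<union> (induced E U)\<inverse>)\<^sup>*}"
    using assms(1) unfolding components_def by blast
  have "(y, z) \<in> induced E U \<union> (induced E U)\<inverse>"
    using assms(2-4) K unfolding ein_def induced_def by auto
  then show ?thesis using assms(2,3) K by (auto intro: rtrancl_into_rtrancl)
qed

lemma components_nonempty: "K \<in> components E U \<Longrightarrow> K \<noteq> {}"
  unfolding components_def by blast

lemma alt_path_singleton: "alt_path E M [x]"
  unfolding alt_path_def by simp

lemma alt_path_nonempty: "alt_path E M p \<Longrightarrow> p \<noteq> []"
  unfolding alt_path_def by blast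

lemma alt_path_take:
  assumes "alt_path E M p" "0 < k"
  shows "alt_path E M (take k p)"
  using assms unfolding alt_path_def by simp

lemma alt_path_snoc:
  assumes p: "alt_path E M p" and "y \<notin> set p" "ein E (last p) y"
    and alternates: "2 \<le> length p \<Longrightarrow> ein M (p ! (length p - 2)) (last p) \<longleftrightarrow> \<not> ein M (last p) y"
  shows "alt_path E M (p @ [y])"
  unfolding alt_path_def
proof (intro conjI allI impI)
  have "p \<noteq> []" using p alt_path_nonempty by blast
  then have last: "last p = p ! (length p - 1)" by (simp add: last_conv_nth)
  show "distinct (p @ [y])" using p \<open>y \<notin> set p\<close> unfolding alt_path_def by simp
  fix i
  show "ein E ((p @ [y]) ! i) ((p @ [y]) ! Suc i)" if "Suc i < length (p @ [y])"
  proof (cases "Suc i < length p")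
    case True
    then show ?thesis using p unfolding alt_path_def by (simp add: nth_append)
  next
    case False
    then have "i = length p - 1" "Suc i = length p" using that by simp_all
    then show ?thesis using \<open>ein E (last p) y\<close> last by (simp add: nth_append)
  qed
  show "ein M ((p @ [y]) ! i) ((p @ [y]) ! Suc i) \<longleftrightarrow> \<not> ein M ((p @ [y]) ! Suc i) ((p @ [y]) ! Suc (Suc i))"
    if "Suc (Suc i) < length (p @ [y])"
  proof (cases "Suc (Suc i) < length p")
    case True
    then show ?thesis using p unfolding alt_path_def by (simp add: nth_append)
  next
    case False
    then have "Suc (Suc i) = length p" using that by simp
    moreover have "length p - Suc 0 = Suc i" "length p - 2 = i" using calculation by auto
    ultimately show ?thesis using alternates last by (simp add: nth_append)
  qed
qed simp

lemma alt_path_drop2: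
  assumes "alt_path E M (a # b # q)" "q \<noteq> []"
    and same: "\<And>x y. x \<in> set q \<Longrightarrow> y \<in> set q \<Longrightarrow> ein M' x y = ein M x y"
  shows "alt_path E M' q"
  unfolding alt_path_def
proof (intro conjI allI impI)
  have p: "\<And>i. Suc i < length q \<Longrightarrow> ein E (q ! i) (q ! Suc i)"
    "\<And>i. Suc (Suc i) < length q \<Longrightarrow> ein M (q ! i) (q ! Suc i) \<longleftrightarrow> \<not> ein M (q ! Suc i) (q ! Suc (Suc i))"
    using assms(1) unfolding alt_path_def by (metis Suc_less_eq length_Cons nth_Cons_Suc)+
  fix i
  show "ein E (q ! i) (q ! Suc i)" if "Suc i < length q" using p(1) that .
  show "ein M' (q ! i) (q ! Suc i) \<longleftrightarrow> \<not> ein M' (q ! Suc i) (q ! Suc (Suc i))"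
    if "Suc (Suc i) < length q" using p(2)[OF that] same that by simp
qed (use assms in \<open>auto simp: alt_path_def\<close>)

section \<open>Maximum matchings in bipartite graphs\<close>

locale bipartite_max_matching =
  fixes P Q :: "'a set" and Eg M :: "('a \<times> 'a) set"
  assumes finite_P: "finite P" and finite_Q: "finite Q" and disjoint: "P \<inter> Q = {}"
    and edges: "Eg \<subseteq> P \<times> Q" and max_M: "max_matching Eg M"
begin

definition "reach = alt_reach P Q Eg M P"
definition "reach_P = reach \<inter> P"

lemma matching_M: "matching Eg M"
  using max_M unfolding max_matching_def by blast

lemma M_subset: "M \<subseteq> Eg"
  using matching_M unfolding matching_def by blast

lemma finite_Eg: "finite Eg"
  using edges finite_P finite_Q by (meson finite_SigmaI finite_subset)

lemma finite_matching: "matching Eg N \<Longrightarrow> finite N"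
  using finite_Eg finite_subset unfolding matching_def by blast

lemma matching_fst_unique: "matching Eg N \<Longrightarrow> (a, b) \<in> N \<Longrightarrow> (a, c) \<in> N \<Longrightarrow> b = c"
  unfolding matching_iff by blast

lemma matching_snd_unique: "matching Eg N \<Longrightarrow> (a, b) \<in> N \<Longrightarrow> (c, b) \<in> N \<Longrightarrow> a = c"
  unfolding matching_iff by blast

lemma matching_edge: "matching Eg N \<Longrightarrow> (a, b) \<in> N \<Longrightarrow> a \<in> P \<and> b \<in> Q"
  unfolding matching_def using edges by blast

lemma ein_Eg_cases:
  "ein Eg a b \<Longrightarrow> (a \<in> P \<and> b \<in> Q \<and> (a, b) \<in> Eg) \<or> (a \<in> Q \<and> b \<in> P \<and> (b, a) \<in> Eg)"
  unfolding ein_def using edges by blast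

lemma ein_matching_P: "matching Eg N \<Longrightarrow> ein N a b \<Longrightarrow> a \<in> P \<Longrightarrow> (a, b) \<in> N"
  unfolding ein_def using matching_edge disjoint by blast

lemma ein_matching_Q: "matching Eg N \<Longrightarrow> ein N a b \<Longrightarrow> a \<in> Q \<Longrightarrow> (b, a) \<in> N"
  unfolding ein_def using matching_edge disjoint by blast

lemma matched_P_iff: "matching Eg N \<Longrightarrow> a \<in> P \<Longrightarrow> matched N a \<longleftrightarrow> (\<exists>b. (a, b) \<in> N)"
  unfolding matched_iff using matching_edge disjoint by blast

lemma matched_Q_iff: "matching Eg N \<Longrightarrow> a \<in> Q \<Longrightarrow> matched N a \<longleftrightarrow> (\<exists>b. (b, a) \<in> N)"
  unfolding matched_iff using matching_edge disjoint by blast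

lemma alt_path_parity:
  assumes "alt_path Eg N p" "hd p \<in> P" "i < length p"
  shows "(even i \<longrightarrow> p ! i \<in> P) \<and> (odd i \<longrightarrow> p ! i \<in> Q)"
  using assms(3)
proof (induction i)
  case 0
  then show ?case using assms(2) by (simp add: hd_conv_nth)
next
  case (Suc i)
  have "ein Eg (p ! i) (p ! Suc i)" using assms(1) Suc.prems unfolding alt_path_def by blast
  then show ?case using Suc ein_Eg_cases disjoint by auto
qed

lemma alt_path_matched_edge_iff_odd:
  assumes "alt_path Eg N p" "\<not> matched N (hd p)" "Suc i < length p"
  shows "ein N (p ! i) (p ! Suc i) \<longleftrightarrow> odd i"
  using assms(3)
proof (induction i)
  case 0
  have "hd p = p ! 0" using alt_path_nonempty[OF assms(1)] by (simp add: hd_conv_nth)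
  then show ?case using assms(2) ein_imp_matched[of N "p ! 0" "p ! Suc 0"] by auto
next
  case (Suc i)
  then show ?case using assms(1) unfolding alt_path_def by simp
qed

lemma matching_exchange:
  assumes N: "matching Eg N" and "(a, b) \<in> Eg" "\<not> matched N a" "(c, b) \<in> N"
  shows "matching Eg (insert (a, b) (N - {(c, b)}))"
    and "card (insert (a, b) (N - {(c, b)})) = card N"
proof -
  have "(a, b) \<notin> N" using \<open>\<not> matched N a\<close> unfolding matched_iff by blast
  moreover have "0 < card N" using \<open>(c, b) \<in> N\<close> finite_matching[OF N] card_gt_0_iff by blast
  ultimately show "card (insert (a, b) (N - {(c, b)})) = card N"
    using \<open>(c, b) \<in> N\<close> finite_matching[OF N] by simp
  have fresh: "z \<noteq> a \<and> w \<noteq> b" if "(z, w) \<in> N - {(c, b)}" for z w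
    using that \<open>\<not> matched N a\<close> matching_snd_unique[OF N _ \<open>(c, b) \<in> N\<close>]
    unfolding matched_iff by blast
  show "matching Eg (insert (a, b) (N - {(c, b)}))"
    unfolding matching_iff
  proof (intro conjI allI impI)
    show "insert (a, b) (N - {(c, b)}) \<subseteq> Eg" using N \<open>(a, b) \<in> Eg\<close> unfolding matching_def by blast
  next
    fix x y z w
    assume "(x, y) \<in> insert (a, b) (N - {(c, b)})" "(z, w) \<in> insert (a, b) (N - {(c, b)})" "x = z \<or> y = w"
    then show "x = z" "y = w" using fresh N unfolding matching_iff by blast+
  qed
qed

text \<open>The new matching exchanges the matched edge \<open>(c, b)\<close> for \<open>(a, b)\<close>.\<close>
lemma alt_path_shift:
  assumes N: "matching Eg N" and p: "alt_path Eg N (a # b # c # q)" and a: "a \<in> P" "\<not> matched N a"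
  shows "(c, b) \<in> N" and "c \<in> P"
    and "\<exists>N'. matching Eg N' \<and> card N' = card N \<and> alt_path Eg N' (c # q) \<and> \<not> matched N' c \<and>
      (\<forall>x\<in>set q. matched N' x \<longleftrightarrow> matched N x)"
proof -
  have "ein Eg a b" "ein N a b \<longleftrightarrow> \<not> ein N b c" "distinct (a # b # c # q)"
    using p unfolding alt_path_def by (auto dest!: spec[of _ 0])
  then have ab: "(a, b) \<in> Eg" "b \<in> Q" and "ein N b c" and dist: "distinct (a # b # c # q)"
    using ein_Eg_cases a disjoint ein_imp_matched[of N a b] by auto
  then show cb: "(c, b) \<in> N" using ein_matching_Q[OF N] by blast
  then show "c \<in> P" using matching_edge[OF N] by blast
  define N' where "N' = insert (a, b) (N - {(c, b)})"
  note N' = matching_exchange[OF N ab(1) a(2) cb, folded N'_def]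
  have same: "ein N' x y = ein N x y" if "x \<in> set (c # q)" "y \<in> set (c # q)" for x y
    using that dist unfolding N'_def ein_def by auto
  have "alt_path Eg N' (c # q)" using alt_path_drop2[OF p _ same] by blast
  moreover have "\<not> matched N' c"
  proof
    assume "matched N' c"
    then obtain d where "(c, d) \<in> N - {(c, b)} \<or> (d, c) \<in> N"
      using dist unfolding N'_def matched_iff by auto
    then show False
      using cb \<open>c \<in> P\<close> disjoint matching_fst_unique[OF N] matching_edge[OF N] by blast
  qed
  moreover have "\<forall>x\<in>set q. matched N' x \<longleftrightarrow> matched N x"
    using dist unfolding N'_def matched_iff by auto
  ultimately show "\<exists>N'. matching Eg N' \<and> card N' = card N \<and> alt_path Eg N' (c # q) \<and> \<not> matched N' c \<and>
      (\<forall>x\<in>set q. matched N' x \<longleftrightarrow> matched N x)"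
    using N' by blast
qed

lemma augmenting_path_imp_larger_matching:
  "alt_path Eg N p \<Longrightarrow> matching Eg N \<Longrightarrow> hd p \<in> P \<Longrightarrow> \<not> matched N (hd p) \<Longrightarrow>
   \<not> matched N (last p) \<Longrightarrow> 2 \<le> length p \<Longrightarrow> \<exists>N'. matching Eg N' \<and> card N' = Suc (card N)"
proof (induction "length p" arbitrary: p N rule: less_induct)
  case less
  obtain a b q where p: "p = a # b # q"
    using less.prems(6) by (metis One_nat_def Suc_1 Suc_le_length_iff)
  have a: "a \<in> P" "\<not> matched N a" using less.prems(3,4) p by simp_all
  show ?case
  proof (cases q)
    case Nil
    have "ein Eg a b" using less.prems(1) unfolding p alt_path_def by (auto dest!: spec[of _ 0])
    then have "(a, b) \<in> Eg" using ein_Eg_cases a(1) disjoint by blast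
    moreover have "\<not> matched N b" using less.prems(5) p Nil by simp
    ultimately have "matching Eg (insert (a, b) N)"
      using less.prems(2) a(2) unfolding matching_iff matched_iff by blast
    moreover have "(a, b) \<notin> N" using a(2) unfolding matched_iff by blast
    ultimately show ?thesis using finite_matching[OF less.prems(2)] by auto
  next
    case (Cons c q')
    note shift = alt_path_shift[OF less.prems(2) less.prems(1)[unfolded p Cons] a]
    then obtain N' where N': "matching Eg N'" "card N' = card N" "alt_path Eg N' (c # q')"
      "\<not> matched N' c" "\<forall>x\<in>set q'. matched N' x \<longleftrightarrow> matched N x" by blast
    have "q' \<noteq> []" using less.prems(5) shift(1) unfolding p Cons matched_iff by auto
    then have "\<not> matched N' (last (c # q'))" using N'(5) less.prems(5) unfolding p Cons by simp
    moreover have "length (c # q') < length p" "2 \<le> length (c # q')"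
      using p Cons \<open>q' \<noteq> []\<close> by (auto simp: Suc_le_eq)
    ultimately obtain N'' where "matching Eg N''" "card N'' = Suc (card N')"
      using less.hyps N'(1,3,4) shift(2) by (metis list.sel(1))
    then show ?thesis using N'(2) by auto
  qed
qed

lemma mem_reach_iff: "x \<in> reach \<longleftrightarrow> x \<in> P \<union> Q \<and>
    (\<exists>u\<in>P. \<not> matched M u \<and> (\<exists>p. alt_path Eg M p \<and> hd p = u \<and> last p = x))"
  unfolding reach_def alt_reach_def by auto

lemma reach_subset: "reach \<subseteq> P \<union> Q"
  using mem_reach_iff by blast

lemma reach_P_subset: "reach_P \<subseteq> P"
  unfolding reach_P_def by blast

lemma alt_path_nth_in_reach:
  assumes "alt_path Eg M p" "hd p \<in> P" "\<not> matched M (hd p)" "j < length p"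
  shows "p ! j \<in> reach"
proof -
  have "alt_path Eg M (take (Suc j) p)" using alt_path_take[OF assms(1)] by simp
  moreover have "hd (take (Suc j) p) = hd p" using assms(4) by (cases p) auto
  moreover have "last (take (Suc j) p) = p ! j" using assms(4) by (simp add: take_Suc_conv_app_nth)
  moreover have "p ! j \<in> P \<union> Q" using alt_path_parity[OF assms(1,2,4)] by auto
  ultimately show ?thesis unfolding mem_reach_iff using assms(2,3) by blast
qed

lemma unmatched_in_reach_P: "u \<in> P \<Longrightarrow> \<not> matched M u \<Longrightarrow> u \<in> reach_P"
  using alt_path_singleton[of Eg M u] unfolding reach_P_def Int_iff mem_reach_iff by force

lemma reachE:
  assumes "x \<in> reach"
  obtains p where "alt_path Eg M p" "hd p \<in> P" "\<not> matched M (hd p)"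
    "length p - 1 < length p" "p ! (length p - 1) = x"
proof -
  obtain p where "alt_path Eg M p" "hd p \<in> P" "\<not> matched M (hd p)" "last p = x"
    using assms unfolding mem_reach_iff by blast
  moreover have "p \<noteq> []" using alt_path_nonempty calculation(1) by blast
  ultimately show ?thesis using that by (simp add: last_conv_nth)
qed

lemma reach_extend:
  assumes p: "alt_path Eg M p" "hd p \<in> P" "\<not> matched M (hd p)"
    and y: "y \<in> P \<union> Q" "ein Eg (last p) y"
    and status: "y \<notin> set p \<Longrightarrow> 2 \<le> length p \<Longrightarrow>
      ein M (p ! (length p - 2)) (last p) \<longleftrightarrow> \<not> ein M (last p) y"
  shows "y \<in> reach"
proof (cases "y \<in> set p")
  case True
  then obtain j where "j < length p" "p ! j = y" by (auto simp: in_set_conv_nth)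
  then show ?thesis using alt_path_nth_in_reach[OF p] by blast
next
  case False
  then have "alt_path Eg M (p @ [y])" using alt_path_snoc[OF p(1) _ y(2)] status by blast
  moreover have "hd (p @ [y]) = hd p" using alt_path_nonempty[OF p(1)] by simp
  ultimately show ?thesis unfolding mem_reach_iff using y(1) p(2,3) by force
qed

lemma reach_P_adj_in_reach:
  assumes "x \<in> reach_P" "ein Eg x y"
  shows "y \<in> reach"
proof -
  have x: "x \<in> reach" "x \<in> P" using assms(1) unfolding reach_P_def by auto
  obtain p where p: "alt_path Eg M p" "hd p \<in> P" "\<not> matched M (hd p)"
    and k: "length p - 1 < length p" "p ! (length p - 1) = x"
    using reachE[OF x(1)] by blast
  define k where "k = length p - 1"
  have "even k" using alt_path_parity[OF p(1,2) k(1)] x(2) disjoint k(2) unfolding k_def by auto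
  have "ein M (p ! (length p - 2)) (last p) \<longleftrightarrow> \<not> ein M (last p) y"
    if "y \<notin> set p" "2 \<le> length p"
  proof -
    have "Suc (k - 1) = k" "odd (k - 1)" using \<open>even k\<close> that(2) unfolding k_def by auto
    then have "ein M (p ! (k - 1)) x"
      using alt_path_matched_edge_iff_odd[OF p(1,3), of "k - 1"] k unfolding k_def by auto
    then have "(x, p ! (k - 1)) \<in> M" using ein_matching_P[OF matching_M] x(2) ein_commute by metis
    moreover have "p ! (k - 1) \<noteq> y" using that(1) k(1) unfolding k_def by auto
    ultimately have "\<not> ein M x y"
      using ein_matching_P[OF matching_M _ x(2)] matching_fst_unique[OF matching_M] by blast
    moreover have "last p = x" "length p - 2 = k - 1"
      using k alt_path_nonempty[OF p(1)] unfolding k_def by (auto simp: last_conv_nth)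
    ultimately show ?thesis using \<open>ein M (p ! (k - 1)) x\<close> by simp
  qed
  moreover have "y \<in> P \<union> Q" using ein_Eg_cases[OF assms(2)] by blast
  moreover have "last p = x" using k alt_path_nonempty[OF p(1)] by (simp add: last_conv_nth)
  ultimately show ?thesis using reach_extend[OF p] assms(2) by blast
qed

lemma reach_Q_partner:
  assumes "y \<in> reach" "y \<in> Q"
  shows "\<exists>x\<in>reach_P. (x, y) \<in> M"
proof -
  obtain p where p: "alt_path Eg M p" "hd p \<in> P" "\<not> matched M (hd p)"
    and k: "length p - 1 < length p" "p ! (length p - 1) = y"
    using reachE[OF assms(1)] by blast
  define k where "k = length p - 1"
  have "odd k" using alt_path_parity[OF p(1,2) k(1)] assms(2) disjoint k(2) unfolding k_def by auto
  have last: "last p = y" using k alt_path_nonempty[OF p(1)] by (simp add: last_conv_nth)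
  have "matched M y"
  proof (rule ccontr)
    assume "\<not> matched M y"
    moreover have "2 \<le> length p" using \<open>odd k\<close> k(1) unfolding k_def by presburger
    ultimately obtain N where "matching Eg N" "card N = Suc (card M)"
      using augmenting_path_imp_larger_matching[OF p(1) matching_M p(2,3)] last by auto
    then show False using max_M unfolding max_matching_def by fastforce
  qed
  then obtain x where xy: "(x, y) \<in> M" using matched_Q_iff[OF matching_M assms(2)] by blast
  have "x \<in> P" using matching_edge[OF matching_M xy] by blast
  have "ein M (p ! (length p - 2)) (last p) \<longleftrightarrow> \<not> ein M (last p) x"
  proof -
    have "Suc (k - 1) = k" "even (k - 1)" using \<open>odd k\<close> by (auto elim: oddE)
    then have "\<not> ein M (p ! (k - 1)) y"
      using alt_path_matched_edge_iff_odd[OF p(1,3), of "k - 1"] k unfolding k_def by auto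
    moreover have "ein M y x" using xy unfolding ein_def by blast
    moreover have "length p - 2 = k - 1" unfolding k_def by simp
    ultimately show ?thesis using last by simp
  qed
  moreover have "ein Eg (last p) x" using xy M_subset last unfolding ein_def by blast
  ultimately have "x \<in> reach" using reach_extend[OF p] \<open>x \<in> P\<close> by blast
  then show ?thesis using xy \<open>x \<in> P\<close> unfolding reach_P_def by blast
qed

lemma adj_reach_P_subset: "adj Eg reach_P \<subseteq> Q"
  using reach_P_subset ein_Eg_cases disjoint unfolding adj_def by blast

lemma reach_eq: "reach = reach_P \<union> adj Eg reach_P"
proof
  show "reach_P \<union> adj Eg reach_P \<subseteq> reach"
    using reach_P_adj_in_reach unfolding reach_P_def adj_def by blast
  show "reach \<subseteq> reach_P \<union> adj Eg reach_P"
  proof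
    fix y assume "y \<in> reach"
    show "y \<in> reach_P \<union> adj Eg reach_P"
    proof (cases "y \<in> P")
      case False
      then have "y \<in> Q" using \<open>y \<in> reach\<close> reach_subset by blast
      then obtain x where "x \<in> reach_P" "(x, y) \<in> M" using reach_Q_partner \<open>y \<in> reach\<close> by blast
      then show ?thesis using M_subset unfolding adj_def ein_def by blast
    qed (use \<open>y \<in> reach\<close> in \<open>simp add: reach_P_def\<close>)
  qed
qed

lemma adj_reach_P_partner: "y \<in> adj Eg reach_P \<Longrightarrow> \<exists>x\<in>reach_P. (x, y) \<in> M"
  using reach_Q_partner reach_eq adj_reach_P_subset by blast

lemma finite_adj: "finite (adj Eg Z)"
proof -
  have "adj Eg Z \<subseteq> P \<union> Q" using edges unfolding adj_def ein_def by blast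
  then show ?thesis using finite_P finite_Q finite_subset by blast
qed

lemma card_P_split: "Z \<subseteq> P \<Longrightarrow> card (P - Z) + card Z = card P"
  using card_Diff_subset[OF finite_subset] card_mono finite_P by fastforce

lemma matching_card_split:
  assumes "matching Eg N" "Z \<subseteq> P"
  shows "card N = card (snd ` {e\<in>N. fst e \<in> Z}) + card (fst ` {e\<in>N. fst e \<notin> Z})"
    and "snd ` {e\<in>N. fst e \<in> Z} \<subseteq> adj Eg Z" and "fst ` {e\<in>N. fst e \<notin> Z} \<subseteq> P - Z"
proof -
  have "inj_on snd {e\<in>N. fst e \<in> Z}" "inj_on fst {e\<in>N. fst e \<notin> Z}"
    using assms(1) unfolding matching_def inj_on_def by blast+
  moreover have "N = {e\<in>N. fst e \<in> Z} \<union> {e\<in>N. fst e \<notin> Z}" by blast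
  then have "card N = card {e\<in>N. fst e \<in> Z} + card {e\<in>N. fst e \<notin> Z}"
    using finite_matching[OF assms(1)] card_Un_disjoint[of "{e\<in>N. fst e \<in> Z}" "{e\<in>N. fst e \<notin> Z}"]
    by auto
  ultimately show "card N = card (snd ` {e\<in>N. fst e \<in> Z}) + card (fst ` {e\<in>N. fst e \<notin> Z})"
    by (simp add: card_image)
  show "snd ` {e\<in>N. fst e \<in> Z} \<subseteq> adj Eg Z"
    using assms(1) unfolding matching_def adj_def ein_def by force
  show "fst ` {e\<in>N. fst e \<notin> Z} \<subseteq> P - Z"
    using matching_edge[OF assms(1)] by force
qed

lemma matching_card_bound:
  assumes "matching Eg N" "Z \<subseteq> P"
  shows "card N + card Z \<le> card (adj Eg Z) + card P"
proof -
  note split = matching_card_split[OF assms]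
  have "card (snd ` {e\<in>N. fst e \<in> Z}) \<le> card (adj Eg Z)"
    using card_mono[OF finite_adj split(2)] .
  moreover have "card (fst ` {e\<in>N. fst e \<notin> Z}) \<le> card (P - Z)"
    using card_mono[OF _ split(3)] finite_P by blast
  ultimately show ?thesis using split(1) card_P_split[OF assms(2)] by linarith
qed

text \<open>The deficiency form of Koenig's theorem: \<open>reach_P\<close> attains equality in
  \<open>matching_card_bound\<close>.\<close>
lemma card_M_reach_P: "card M + card reach_P = card (adj Eg reach_P) + card P"
proof -
  note split = matching_card_split[OF matching_M reach_P_subset]
  have "snd ` {e\<in>M. fst e \<in> reach_P} = adj Eg reach_P"
    using split(2) adj_reach_P_partner by force
  moreover have "fst ` {e\<in>M. fst e \<notin> reach_P} = P - reach_P"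
  proof
    show "P - reach_P \<subseteq> fst ` {e\<in>M. fst e \<notin> reach_P}"
      using unmatched_in_reach_P matched_P_iff[OF matching_M] by force
  qed (rule split(3))
  ultimately show ?thesis using split(1) card_P_split[OF reach_P_subset] by simp
qed

lemma tight_set_saturated:
  assumes "Z \<subseteq> P" "card M + card Z = card (adj Eg Z) + card P"
  shows "z \<in> P - Z \<Longrightarrow> matched M z" and "y \<in> adj Eg Z \<Longrightarrow> \<exists>z\<in>Z. (z, y) \<in> M"
proof -
  note split = matching_card_split[OF matching_M assms(1)]
  have le: "card (snd ` {e\<in>M. fst e \<in> Z}) \<le> card (adj Eg Z)"
    "card (fst ` {e\<in>M. fst e \<notin> Z}) \<le> card (P - Z)"
    using card_mono[OF finite_adj split(2)] card_mono[OF _ split(3)] finite_P by blast+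
  then have "card (snd ` {e\<in>M. fst e \<in> Z}) = card (adj Eg Z)"
    "card (fst ` {e\<in>M. fst e \<notin> Z}) = card (P - Z)"
    using split(1) card_P_split[OF assms(1)] assms(2) by linarith+
  then have "snd ` {e\<in>M. fst e \<in> Z} = adj Eg Z" "fst ` {e\<in>M. fst e \<notin> Z} = P - Z"
    using card_subset_eq[OF finite_adj split(2)] card_subset_eq[OF _ split(3)] finite_P by blast+
  then show "z \<in> P - Z \<Longrightarrow> matched M z" "y \<in> adj Eg Z \<Longrightarrow> \<exists>z\<in>Z. (z, y) \<in> M"
    unfolding matched_iff by force+
qed

lemma reach_P_least:
  assumes Z: "Z \<subseteq> P" "card M + card Z = card (adj Eg Z) + card P"
  shows "reach_P \<subseteq> Z"
proof
  fix x assume "x \<in> reach_P"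
  then have x: "x \<in> reach" "x \<in> P" unfolding reach_P_def by auto
  obtain p where p: "alt_path Eg M p" "hd p \<in> P" "\<not> matched M (hd p)"
    and k: "length p - 1 < length p" "p ! (length p - 1) = x"
    using reachE[OF x(1)] by blast
  have "(even i \<longrightarrow> p ! i \<in> Z) \<and> (odd i \<longrightarrow> p ! i \<in> adj Eg Z)" if "i < length p" for i
    using that
  proof (induction i)
    case 0
    then show ?case using p(2,3) tight_set_saturated(1)[OF Z] by (auto simp: hd_conv_nth)
  next
    case (Suc i)
    have edge: "ein Eg (p ! i) (p ! Suc i)" using p(1) Suc.prems unfolding alt_path_def by blast
    show ?case
    proof (cases "even i")
      case True
      then show ?thesis using Suc edge unfolding adj_def by auto
    next
      case False
      then obtain z where z: "z \<in> Z" "(z, p ! i) \<in> M"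
        using Suc tight_set_saturated(2)[OF Z] by auto
      have "ein M (p ! i) (p ! Suc i)" "p ! i \<in> Q"
        using alt_path_matched_edge_iff_odd[OF p(1,3) Suc.prems] alt_path_parity[OF p(1,2)] Suc.prems False
        by auto
      then have "p ! Suc i = z"
        using ein_matching_Q[OF matching_M] matching_snd_unique[OF matching_M] z(2) by blast
      then show ?thesis using z False by simp
    qed
  qed
  moreover have "even (length p - 1)" using alt_path_parity[OF p(1,2) k(1)] x(2) disjoint k(2) by auto
  ultimately show "x \<in> Z" using k by auto
qed

context
  fixes E :: "('a \<times> 'a) set" and K :: "'a set"
  assumes sub: "\<And>a b. ein Eg a b \<Longrightarrow> ein E a b" and K: "K \<in> components E reach"
begin

lemma reach_component_closed: "y \<in> K \<Longrightarrow> z \<in> reach \<Longrightarrow> ein Eg y z \<Longrightarrow> z \<in> K"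
  using components_closed[OF K] sub by blast

lemma adj_reach_P_Diff_component: "adj Eg (reach_P - K) = adj Eg reach_P - K"
proof (intro equalityI subsetI)
  fix y assume "y \<in> adj Eg (reach_P - K)"
  then obtain z where z: "z \<in> reach_P" "z \<notin> K" "ein Eg z y" unfolding adj_def by blast
  have "y \<notin> K" using reach_component_closed[of y z] z reach_eq ein_commute[of Eg z y] by blast
  then show "y \<in> adj Eg reach_P - K" using z unfolding adj_def by blast
next
  fix y assume y: "y \<in> adj Eg reach_P - K"
  then obtain z where z: "z \<in> reach_P" "ein Eg z y" unfolding adj_def by blast
  have "z \<notin> K" using reach_component_closed[of z y] z y reach_eq by blast
  then show "y \<in> adj Eg (reach_P - K)" using z unfolding adj_def by blast
qed

text \<open>If \<open>K\<close> were balanced, \<open>reach_P - K\<close> would still attain equality in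
  \<open>matching_card_bound\<close>; by \<open>reach_P_least\<close> this forces \<open>K\<close> to miss \<open>reach_P\<close>,
  and then \<open>K\<close> is empty.\<close>
lemma component_of_reach_unbalanced: "card (K \<inter> Q) < card (K \<inter> P)"
proof (rule ccontr)
  assume unbalanced: "\<not> card (K \<inter> Q) < card (K \<inter> P)"
  have KP: "K \<inter> P \<subseteq> reach_P" and KQ: "K \<inter> Q \<subseteq> adj Eg reach_P"
    using components_subset[OF K] reach_eq reach_P_subset adj_reach_P_subset disjoint by blast+
  have Z: "reach_P - K \<subseteq> P" using reach_P_subset by blast
  have "card reach_P = card (reach_P - K) + card (K \<inter> P)"
  proof -
    have "reach_P = (reach_P - K) \<union> (K \<inter> P)" "(reach_P - K) \<inter> (K \<inter> P) = {}"
      using KP reach_P_subset by auto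
    then show ?thesis using finite_subset[OF reach_P_subset finite_P] card_Un_disjoint by (metis finite_Un)
  qed
  moreover have "card (adj Eg reach_P) = card (adj Eg (reach_P - K)) + card (K \<inter> Q)"
  proof -
    have "adj Eg reach_P = adj Eg (reach_P - K) \<union> (K \<inter> Q)" "adj Eg (reach_P - K) \<inter> (K \<inter> Q) = {}"
      using KQ adj_reach_P_Diff_component adj_reach_P_subset by auto
    then show ?thesis using finite_adj card_Un_disjoint by (metis finite_Un)
  qed
  ultimately have "card M + card (reach_P - K) = card (adj Eg (reach_P - K)) + card P"
    using matching_card_bound[OF matching_M Z] card_M_reach_P unbalanced by linarith
  then have "reach_P \<inter> K = {}" using reach_P_least[OF Z] by blast
  moreover have "K \<inter> Q = {}"
  proof (rule ccontr)
    assume "K \<inter> Q \<noteq> {}"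
    then obtain y z where "y \<in> K" "z \<in> reach_P" "ein Eg z y" using KQ unfolding adj_def by blast
    then have "z \<in> K" using reach_component_closed[of y z] reach_eq ein_commute[of Eg z y] by blast
    then show False using calculation \<open>z \<in> reach_P\<close> by blast
  qed
  ultimately have "K = {}" using KP components_subset[OF K] reach_subset by blast
  then show False using components_nonempty[OF K] by blast
qed

end

end

lemma reach_P_stable:
  assumes G1: "bipartite_max_matching P Q E1 M1" and G2: "bipartite_max_matching P Q E2 M2"
    and "card M1 \<le> card M2"
    and same_adj: "\<And>Z. Z \<subseteq> bipartite_max_matching.reach_P P Q E1 M1 \<Longrightarrow> adj E2 Z = adj E1 Z"
  shows "bipartite_max_matching.reach_P P Q E2 M2 = bipartite_max_matching.reach_P P Q E1 M1"
proof -
  interpret G1: bipartite_max_matching P Q E1 M1 by (rule G1)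
  interpret G2: bipartite_max_matching P Q E2 M2 by (rule G2)
  have adj1: "adj E2 G1.reach_P = adj E1 G1.reach_P" using same_adj by blast
  have "card M2 + card G1.reach_P \<le> card (adj E1 G1.reach_P) + card P"
    using G2.matching_card_bound[OF G2.matching_M G1.reach_P_subset] adj1 by simp
  then have "card M2 = card M1" using G1.card_M_reach_P \<open>card M1 \<le> card M2\<close> by linarith
  then have "G2.reach_P \<subseteq> G1.reach_P"
    using G2.reach_P_least[OF G1.reach_P_subset] G1.card_M_reach_P adj1 by simp
  moreover from this have "card M1 + card G2.reach_P = card (adj E1 G2.reach_P) + card P"
    using G2.card_M_reach_P same_adj \<open>card M2 = card M1\<close> by simp
  then have "G1.reach_P \<subseteq> G2.reach_P" using G1.reach_P_least[OF G2.reach_P_subset] by blast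
  ultimately show ?thesis by blast
qed

section \<open>The clustering loop\<close>

lemma self_contained_cong:
  assumes "\<forall>Y\<subseteq>Fg. adj E1 Y = adj E2 Y"
  shows "self_contained E1 Fg X = self_contained E2 Fg X"
  using assms unfolding self_contained_def by (metis order_trans)

lemma min_self_contained_cong:
  assumes "\<forall>Y\<subseteq>Fg. adj E1 Y = adj E2 Y"
  shows "min_self_contained E1 Fg X = min_self_contained E2 Fg X"
  unfolding min_self_contained_def using self_contained_cong[OF assms] by simp

lemma co_core_cong:
  "co_core EC Fs U cls eds \<Longrightarrow> (\<forall>x\<in>Fs \<inter> U. \<forall>y. ein EC x y = ein EC' x y) \<Longrightarrow> co_core EC' Fs U cls eds"
proof (induction rule: co_core.induct)
  case co_nil
  show ?case by (rule co_core.co_nil)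
next
  case (co_step U S C cls eds)
  have adj_eq: "\<forall>Y\<subseteq>Fs \<inter> U. adj (induced EC U) Y = adj (induced EC' U) Y"
    using co_step.prems unfolding adj_induced by blast
  have S: "S \<subseteq> Fs \<inter> U"
    using co_step.hyps(2) unfolding min_self_contained_def self_contained_def by blast
  have A_eq: "adj (induced EC U) S = adj (induced EC' U) S" using adj_eq S by blast
  have "adj EC S = adj EC' S" using co_step.prems S unfolding adj_def by blast
  moreover have msc: "min_self_contained (induced EC' U) (Fs \<inter> U) S"
    using co_step.hyps(2) min_self_contained_cong[OF adj_eq] by simp
  moreover have "co_core EC' Fs (U - (S \<union> adj (induced EC' U) S)) cls eds"
    using co_step.IH co_step.prems co_step.hyps(3) A_eq by simp
  ultimately show ?case
    using co_core.co_step[OF co_step.hyps(1) msc refl] co_step.hyps(3) A_eq by simp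
qed

definition perfectly_matched :: "('a \<times> 'a) set \<Rightarrow> ('a \<times> 'a) set \<Rightarrow> 'a set \<Rightarrow> bool" where
  "perfectly_matched M Eg U \<longleftrightarrow> (\<forall>x y z. ein M x y \<longrightarrow> ein M x z \<longrightarrow> y = z) \<and>
     (\<forall>x\<in>U. \<exists>y\<in>U. ein M x y \<and> ein Eg x y)"

lemma perfectly_matched_partner:
  assumes "perfectly_matched M Eg U" "Y \<subseteq> U"
  obtains g where "inj_on g Y" "\<And>x. x \<in> Y \<Longrightarrow> g x \<in> U \<and> ein M x (g x) \<and> ein Eg x (g x)"
proof -
  define g where "g x = (SOME y. y \<in> U \<and> ein M x y \<and> ein Eg x y)" for x
  have g: "g x \<in> U \<and> ein M x (g x) \<and> ein Eg x (g x)" if "x \<in> Y" for x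
  proof -
    have "\<exists>y. y \<in> U \<and> ein M x y \<and> ein Eg x y"
      using assms that unfolding perfectly_matched_def by blast
    then show ?thesis unfolding g_def by (rule someI_ex)
  qed
  have "inj_on g Y"
  proof (rule inj_onI)
    fix x x' assume "x \<in> Y" "x' \<in> Y" "g x = g x'"
    then have "ein M x (g x)" "ein M x' (g x)" using g[OF \<open>x \<in> Y\<close>] g[OF \<open>x' \<in> Y\<close>] by simp_all
    then have "ein M (g x) x" "ein M (g x) x'" unfolding ein_def by auto
    then show "x = x'" using assms(1) unfolding perfectly_matched_def by blast
  qed
  then show ?thesis using that g by blast
qed

lemma perfectly_matched_Diff:
  assumes "perfectly_matched M Eg U" "perfectly_matched M Eg C"
  shows "perfectly_matched M Eg (U - C)"
  unfolding perfectly_matched_def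
proof (intro conjI ballI)
  have unique: "\<And>x y z. ein M x y \<Longrightarrow> ein M x z \<Longrightarrow> y = z"
    using assms(1) unfolding perfectly_matched_def by blast
  then show "\<forall>x y z. ein M x y \<longrightarrow> ein M x z \<longrightarrow> y = z" by blast
  fix x assume x: "x \<in> U - C"
  then obtain y where y: "y \<in> U" "ein M x y" "ein Eg x y"
    using assms(1) unfolding perfectly_matched_def by blast
  have "y \<notin> C"
  proof
    assume "y \<in> C"
    then obtain z where "z \<in> C" "ein M y z" using assms(2) unfolding perfectly_matched_def by blast
    then show False using unique[of y z x] y(2) x ein_commute[of M x y] by blast
  qed
  then show "\<exists>y\<in>U - C. ein M x y \<and> ein Eg x y" using y by blast
qed

locale core_graph =
  fixes EC :: "('a \<times> 'a) set" and Fs Vs :: "'a set"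
  assumes edges: "EC \<subseteq> Vs \<times> Fs" and disjoint: "Vs \<inter> Fs = {}"
begin

text \<open>\<open>U\<close> is the vertex set of the current graph \<open>B''\<close> of the loop, and \<open>A U X\<close> is
  \<open>adj\<^bsub>B''\<^esub> X\<close>.\<close>
abbreviation "A U X \<equiv> adj (induced EC U) X"
abbreviation "msc U S \<equiv> min_self_contained (induced EC U) (Fs \<inter> U) S"
abbreviation "sc U S \<equiv> self_contained (induced EC U) (Fs \<inter> U) S"

definition "hall U \<longleftrightarrow> (\<forall>Y\<subseteq>Fs \<inter> U. card Y \<le> card (A U Y))"

lemma A_subset: "X \<subseteq> Fs \<Longrightarrow> A U X \<subseteq> U \<inter> Vs"
  unfolding adj_induced ein_def using edges disjoint by blast

lemma A_Diff: "X \<inter> D = {} \<Longrightarrow> A (U - D) X = A U X - D"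
  unfolding adj_induced by blast

lemma finite_A: "finite U \<Longrightarrow> finite (A U X)"
  unfolding adj_induced by auto

lemma min_self_containedD:
  assumes "msc U S"
  shows "S \<noteq> {}" "S \<subseteq> Fs \<inter> U" "card S = card (A U S)" "\<And>Y. Y \<subseteq> S \<Longrightarrow> card Y \<le> card (A U Y)"
    "\<And>Y. Y \<subset> S \<Longrightarrow> Y \<noteq> {} \<Longrightarrow> \<not> sc U Y"
  using assms unfolding min_self_contained_def self_contained_def by blast+

lemma min_self_contained_Diff:
  assumes "msc U S" "D \<inter> (S \<union> A U S) = {}"
  shows "msc (U - D) S" "A (U - D) S = A U S"
proof -
  have A_eq: "A (U - D) Y = A U Y" if "Y \<subseteq> S" for Y
    using A_Diff[of Y D U] adj_mono[OF that, of "induced EC U"] that assms(2) by blast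
  then show "A (U - D) S = A U S" by blast
  have "sc (U - D) Y = sc U Y" if "Y \<subseteq> S" for Y
  proof -
    have "Y \<subseteq> Fs \<inter> (U - D) \<longleftrightarrow> Y \<subseteq> Fs \<inter> U" using that assms(2) by blast
    moreover have "\<forall>Z\<subseteq>Y. A (U - D) Z = A U Z" using A_eq that by blast
    ultimately show ?thesis unfolding self_contained_def by (metis A_eq that)
  qed
  then show "msc (U - D) S"
    using assms(1) unfolding min_self_contained_def by (meson order.refl psubset_imp_subset)
qed

text \<open>Under Hall's condition the function \<open>Y \<mapsto> card (A U Y) - card Y\<close> is a nonnegative
  submodular function vanishing on self-contained sets, so two distinct minimal ones cannot meet.\<close>
lemma min_self_contained_disjoint:
  assumes "finite U" "hall U" "msc U S" "msc U S'" "S \<noteq> S'"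
  shows "S \<inter> S' = {}" "A U S \<inter> A U S' = {}"
proof -
  note m = min_self_containedD[OF assms(3)] and m' = min_self_containedD[OF assms(4)]
  define I where "I = S \<inter> S'"
  have fin: "finite S" "finite S'" using m(2) m'(2) assms(1) finite_subset by blast+
  have "card (A U S) + card (A U S') = card (A U (S \<union> S')) + card (A U S \<inter> A U S')"
    unfolding adj_Un using card_Un_Int finite_A[OF assms(1)] by blast
  moreover have "card S + card S' = card (S \<union> S') + card I"
    unfolding I_def using card_Un_Int fin by blast
  moreover have "card I \<le> card (A U I)" using m(4) unfolding I_def by blast
  moreover have "S \<union> S' \<subseteq> Fs \<inter> U" using m(2) m'(2) by blast
  then have "card (S \<union> S') \<le> card (A U (S \<union> S'))" using assms(2) unfolding hall_def by blast
  moreover have "A U I \<subseteq> A U S \<inter> A U S'"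
    unfolding I_def using adj_mono[of "S \<inter> S'" S] adj_mono[of "S \<inter> S'" S'] by blast
  then have "card (A U I) \<le> card (A U S \<inter> A U S')"
    using finite_A[OF assms(1), of S] by (intro card_mono) auto
  ultimately have tight: "card I = card (A U I)" "card (A U S \<inter> A U S') = card (A U I)"
    using m(3) m'(3) by linarith+
  have "I = {}"
  proof (rule ccontr)
    assume "I \<noteq> {}"
    have "I \<subseteq> S" "I \<subseteq> S'" unfolding I_def by blast+
    have "sc U I" unfolding self_contained_def
    proof (intro conjI allI impI)
      show "I \<subseteq> Fs \<inter> U" using \<open>I \<subseteq> S\<close> m(2) by blast
      show "card Y \<le> card (A U Y)" if "Y \<subseteq> I" for Y using that \<open>I \<subseteq> S\<close> m(4) by blast
    qed (rule tight(1))
    then have "\<not> I \<subset> S" "\<not> I \<subset> S'" using m(5) m'(5) \<open>I \<noteq> {}\<close> by blast+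
    then have "I = S" "I = S'" using \<open>I \<subseteq> S\<close> \<open>I \<subseteq> S'\<close> by blast+
    then show False using assms(5) by blast
  qed
  then show "S \<inter> S' = {}" unfolding I_def .
  show "A U S \<inter> A U S' = {}" using tight(2) \<open>I = {}\<close> finite_A[OF assms(1)] by simp
qed

lemma min_self_contained_clusters_disjoint:
  assumes "finite U" "hall U" "msc U S" "msc U S'" "S \<noteq> S'"
  shows "(S \<union> A U S) \<inter> (S' \<union> A U S') = {}"
proof -
  have "S \<subseteq> Fs" "S' \<subseteq> Fs" using min_self_containedD(2) assms(3,4) by blast+
  then have "A U S \<subseteq> Vs" "A U S' \<subseteq> Vs" using A_subset by blast+
  then show ?thesis
    using min_self_contained_disjoint[OF assms] \<open>S \<subseteq> Fs\<close> \<open>S' \<subseteq> Fs\<close> disjoint by blast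
qed

lemma hall_Diff_cluster:
  assumes "finite U" "hall U" "S \<subseteq> Fs \<inter> U" "card S = card (A U S)"
  shows "hall (U - (S \<union> A U S))"
  unfolding hall_def
proof (intro allI impI)
  fix Y assume Y: "Y \<subseteq> Fs \<inter> (U - (S \<union> A U S))"
  have "A (U - (S \<union> A U S)) Y = A U Y - (S \<union> A U S)" using Y by (intro A_Diff) blast
  also have "\<dots> = A U Y - A U S"
  proof -
    have "A U Y \<subseteq> Vs" using A_subset[of Y U] Y by blast
    then show ?thesis using assms(3) disjoint by blast
  qed
  finally have A_eq: "A (U - (S \<union> A U S)) Y = A U Y - A U S" .
  have "A U (Y \<union> S) = (A U Y - A U S) \<union> A U S" by (auto simp: adj_Un)
  moreover have "card ((A U Y - A U S) \<union> A U S) = card (A U Y - A U S) + card (A U S)"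
    using finite_A[OF assms(1)] by (intro card_Un_disjoint) auto
  ultimately have "card (A U (Y \<union> S)) = card (A U Y - A U S) + card (A U S)" by simp
  moreover have "card (Y \<union> S) = card Y + card S"
  proof (rule card_Un_disjoint)
    show "finite Y" "finite S" using Y assms(1,3) finite_subset by blast+
  qed (use Y in blast)
  moreover have "Y \<union> S \<subseteq> Fs \<inter> U" using Y assms(3) by blast
  then have "card (Y \<union> S) \<le> card (A U (Y \<union> S))" using assms(2) unfolding hall_def by blast
  ultimately show "card Y \<le> card (A (U - (S \<union> A U S)) Y)" unfolding A_eq using assms(4) by linarith
qed

lemma hall_if_perfectly_matched:
  assumes "finite U" "perfectly_matched M EC U"
  shows "hall U"
  unfolding hall_def
proof (intro allI impI)
  fix Y assume Y: "Y \<subseteq> Fs \<inter> U"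
  then have "Y \<subseteq> U" by blast
  then obtain g where g: "inj_on g Y" "\<And>x. x \<in> Y \<Longrightarrow> g x \<in> U \<and> ein M x (g x) \<and> ein EC x (g x)"
    using perfectly_matched_partner[OF assms(2)] by blast
  then have "g ` Y \<subseteq> A U Y" using Y unfolding adj_induced by blast
  then have "card (g ` Y) \<le> card (A U Y)" by (rule card_mono[OF finite_A[OF assms(1)]])
  then show "card Y \<le> card (A U Y)" using card_image[OF g(1)] by simp
qed

lemma co_core_clusters:
  assumes "co_core EC Fs U cls eds"
  shows "T \<in> cls \<Longrightarrow> T \<noteq> {} \<and> T \<subseteq> U" and "x \<in> eds \<Longrightarrow> snd x \<in> cls"
    and "T \<in> cls \<Longrightarrow> T' \<in> cls \<Longrightarrow> T \<inter> T' \<noteq> {} \<Longrightarrow> T = T'"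
proof -
  have "(\<forall>T\<in>cls. T \<noteq> {} \<and> T \<subseteq> U) \<and> (\<forall>x\<in>eds. snd x \<in> cls) \<and>
     (\<forall>T\<in>cls. \<forall>T'\<in>cls. T \<inter> T' \<noteq> {} \<longrightarrow> T = T')"
    using assms
  proof (induction rule: co_core.induct)
    case (co_step U S C cls eds)
    have "S \<noteq> {}" "S \<subseteq> Fs \<inter> U" using min_self_containedD[OF co_step.hyps(2)] by auto
    moreover have "A U S \<subseteq> U" using A_subset[of S U] calculation(2) by blast
    ultimately have "C \<noteq> {}" "C \<subseteq> U" using co_step.hyps(3) by auto
    then show ?case using co_step.IH by auto
  qed simp
  then show "T \<in> cls \<Longrightarrow> T \<noteq> {} \<and> T \<subseteq> U" "x \<in> eds \<Longrightarrow> snd x \<in> cls"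
    "T \<in> cls \<Longrightarrow> T' \<in> cls \<Longrightarrow> T \<inter> T' \<noteq> {} \<Longrightarrow> T = T'"
    by blast+
qed

lemma co_core_first_step:
  "co_core EC Fs U cls eds \<Longrightarrow> finite U \<Longrightarrow> hall U \<Longrightarrow> msc U S' \<Longrightarrow>
   \<exists>cls' eds'. co_core EC Fs (U - (S' \<union> A U S')) cls' eds' \<and> cls = insert (S' \<union> A U S') cls' \<and>
      eds = {(v, S' \<union> A U S') | v. v \<in> adj EC S' - A U S'} \<union> eds'"
proof (induction arbitrary: S' rule: co_core.induct)
  case co_nil
  then show ?case using min_self_containedD(1,2)[OF co_nil.prems(3)] by blast
next
  case (co_step U S C cls eds)
  show ?case
  proof (cases "S = S'")
    case True
    then show ?thesis using co_step.hyps by blast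
  next
    case False
    note m = min_self_containedD[OF co_step.hyps(2)]
    define C' where "C' = S' \<union> A U S'"
    have CC': "C \<inter> C' = {}"
      using min_self_contained_clusters_disjoint[OF co_step.prems(1,2) co_step.hyps(2) co_step.prems(3) False]
        co_step.hyps(3) unfolding C'_def by simp
    have "C \<inter> (S' \<union> A U S') = {}" "C' \<inter> (S \<union> A U S) = {}"
      using CC' co_step.hyps(3) unfolding C'_def by blast+
    note S'_in = min_self_contained_Diff[OF co_step.prems(3) this(1)]
      and S_in = min_self_contained_Diff[OF co_step.hyps(2) this(2)]
    have C'_eq: "S' \<union> A (U - C) S' = C'" "S \<union> A (U - C') S = C"
      using S'_in(2) S_in(2) CC' co_step.hyps(3) unfolding C'_def by auto
    have "hall (U - C)"
      using hall_Diff_cluster[OF co_step.prems(1,2) m(2,3)] co_step.hyps(3) by simp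
    then obtain cls' eds' where IH: "co_core EC Fs (U - C - C') cls' eds'"
      "cls = insert C' cls'" "eds = {(v, C') |v. v \<in> adj EC S' - A (U - C) S'} \<union> eds'"
      using co_step.IH[OF _ _ S'_in(1)] co_step.prems(1) CC' C'_eq(1) unfolding C'_def by auto
    have "U - C' \<noteq> {}" using m(1,2) CC' co_step.hyps(3) by blast
    moreover have "U - C' - C = U - C - C'" by blast
    then have "co_core EC Fs (U - C' - (S \<union> A (U - C') S)) cls' eds'" using IH(1) C'_eq(2) by simp
    ultimately have "co_core EC Fs (U - C') (insert C cls')
        ({(v, C) |v. v \<in> adj EC S - A (U - C') S} \<union> eds')"
      using co_core.co_step[OF _ S_in(1) refl] C'_eq(2) by simp
    then show ?thesis
      using IH(2,3) S'_in(2) S_in(2) CC' co_step.hyps(3) unfolding C'_def by auto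
  qed
qed

lemma co_core_unique:
  "co_core EC Fs U cls eds \<Longrightarrow> finite U \<Longrightarrow> hall U \<Longrightarrow> co_core EC Fs U cls' eds' \<Longrightarrow>
   cls = cls' \<and> eds = eds'"
proof (induction arbitrary: cls' eds' rule: co_core.induct)
  case co_nil
  then show ?case using co_core.cases by blast
next
  case (co_step U S C cls eds)
  note m = min_self_containedD[OF co_step.hyps(2)]
  obtain cls'' eds'' where step: "co_core EC Fs (U - C) cls'' eds''" "cls' = insert C cls''"
     "eds' = {(v, C) |v. v \<in> adj EC S - A U S} \<union> eds''"
    using co_core_first_step[OF co_step.prems(3,1,2) co_step.hyps(2)] co_step.hyps(3) by blast
  have "hall (U - C)" using hall_Diff_cluster[OF co_step.prems(1,2) m(2,3)] co_step.hyps(3) by simp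
  then have "cls = cls'' \<and> eds = eds''" using co_step.IH step(1) co_step.prems(1) by blast
  then show ?case using step by simp
qed

lemma co_core_remove_cluster:
  "co_core EC Fs U cls eds \<Longrightarrow> C0 \<in> cls \<Longrightarrow>
   co_core EC Fs (U - C0) (cls - {C0}) {x \<in> eds. snd x \<noteq> C0}"
proof (induction rule: co_core.induct)
  case (co_step U S C cls eds)
  note clusters = co_core_clusters[OF co_step.hyps(4)]
  have "C \<noteq> {}" using min_self_containedD(1)[OF co_step.hyps(2)] co_step.hyps(3) by blast
  show ?case
  proof (cases "C0 = C")
    case True
    have "C \<notin> cls" using clusters(1)[of C] \<open>C \<noteq> {}\<close> by blast
    then have "insert C cls - {C0} = cls" "{x \<in> {(v, C) |v. v \<in> adj EC S - A U S} \<union> eds. snd x \<noteq> C0} = eds"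
      using True clusters(2) \<open>C \<notin> cls\<close> by auto
    then show ?thesis using co_step.hyps(4) True by simp
  next
    case False
    then have "C0 \<in> cls" using co_step.prems by blast
    then have "C0 \<inter> (S \<union> A U S) = {}" using clusters(1)[of C0] co_step.hyps(3) by blast
    note S_in = min_self_contained_Diff[OF co_step.hyps(2) this]
    have "U - C0 \<noteq> {}" using min_self_containedD(1,2)[OF co_step.hyps(2)] \<open>C0 \<inter> (S \<union> A U S) = {}\<close> by blast
    moreover have "U - C0 - (S \<union> A (U - C0) S) = U - C - C0" using S_in(2) co_step.hyps(3) by blast
    then have "co_core EC Fs (U - C0 - (S \<union> A (U - C0) S)) (cls - {C0}) {x \<in> eds. snd x \<noteq> C0}"
      using co_step.IH[OF \<open>C0 \<in> cls\<close>] by simp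
    ultimately have "co_core EC Fs (U - C0) (insert C (cls - {C0}))
       ({(v, C) |v. v \<in> adj EC S - A U S} \<union> {x \<in> eds. snd x \<noteq> C0})"
      using co_core.co_step[OF _ S_in(1) refl] S_in(2) co_step.hyps(3) by simp
    moreover have "insert C (cls - {C0}) = insert C cls - {C0}" using False by blast
    moreover have "{(v, C) |v. v \<in> adj EC S - A U S} \<union> {x \<in> eds. snd x \<noteq> C0} =
       {x \<in> {(v, C) |v. v \<in> adj EC S - A U S} \<union> eds. snd x \<noteq> C0}" using False by auto
    ultimately show ?thesis by simp
  qed
qed simp

lemma min_self_contained_perfectly_matched:
  assumes "finite U" "perfectly_matched M EC U" "msc U S"
  shows "perfectly_matched M EC (S \<union> A U S)"
  unfolding perfectly_matched_def
proof (intro conjI ballI)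
  note m = min_self_containedD[OF assms(3)]
  have "S \<subseteq> U" using m(2) by blast
  then obtain g where g: "inj_on g S" "\<And>x. x \<in> S \<Longrightarrow> g x \<in> U \<and> ein M x (g x) \<and> ein EC x (g x)"
    using perfectly_matched_partner[OF assms(2)] by blast
  have "g ` S \<subseteq> A U S" using g(2) m(2) unfolding adj_induced by blast
  moreover have "card (g ` S) = card (A U S)" using card_image[OF g(1)] m(3) by simp
  ultimately have gS: "g ` S = A U S" using card_subset_eq[OF finite_A[OF assms(1)]] by blast
  fix x assume "x \<in> S \<union> A U S"
  then consider "x \<in> S" | y where "y \<in> S" "x = g y" using gS by blast
  then show "\<exists>y\<in>S \<union> A U S. ein M x y \<and> ein EC x y"
  proof cases
    case 1
    then show ?thesis using g(2) gS by blast
  next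
    case 2
    then show ?thesis using g(2)[of y] ein_commute[of M y x] ein_commute[of EC y x] by blast
  qed
qed (use assms(2) in \<open>auto simp: perfectly_matched_def\<close>)

lemma co_core_perfectly_matched:
  "co_core EC Fs U cls eds \<Longrightarrow> finite U \<Longrightarrow> perfectly_matched M EC U \<Longrightarrow> T \<in> cls \<Longrightarrow>
   perfectly_matched M EC T"
proof (induction rule: co_core.induct)
  case (co_step U S C cls eds)
  then have "perfectly_matched M EC C"
    using min_self_contained_perfectly_matched by blast
  moreover from this have "perfectly_matched M EC (U - C)"
    using perfectly_matched_Diff co_step.prems(2) by blast
  ultimately show ?case using co_step by blast
qed simp

text \<open>Constraints with a single neighbour are minimal self-contained sets on their own, so pairs
  of such a constraint and its neighbour can be split off in any order.\<close>
lemma co_core_add_pairs: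
  assumes "co_core EC Fs U cls eds" "finite Pr"
    and "\<And>v f. (v, f) \<in> Pr \<Longrightarrow> f \<in> Fs \<and> adj EC {f} = {v}"
    and "\<And>v f v' f'. (v, f) \<in> Pr \<Longrightarrow> (v', f') \<in> Pr \<Longrightarrow> (v, f) \<noteq> (v', f') \<Longrightarrow> {v, f} \<inter> {v', f'} = {}"
    and "\<And>v f. (v, f) \<in> Pr \<Longrightarrow> {v, f} \<inter> U = {}"
  shows "co_core EC Fs (U \<union> (\<Union>(v, f)\<in>Pr. {v, f})) (cls \<union> (\<lambda>(v, f). {v, f}) ` Pr) eds"
  using assms(2-5)
proof (induction Pr rule: finite_induct)
  case empty
  then show ?case using assms(1) by simp
next
  case (insert p Pr)
  obtain v f where p: "p = (v, f)" by force
  define U' where "U' = U \<union> (\<Union>(v, f)\<in>insert p Pr. {v, f})"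
  have f: "f \<in> Fs" "adj EC {f} = {v}" using insert.prems(1) p by blast+
  have "v \<in> U'" "f \<in> U'" unfolding U'_def p by auto
  moreover have "ein EC f y \<longleftrightarrow> y = v" for y using f(2) unfolding adj_def by blast
  ultimately have A_f: "A U' {f} = {v}" unfolding adj_induced by auto
  have "sc U' {f}"
    unfolding self_contained_def A_f using f(1) \<open>f \<in> U'\<close> by (auto simp: subset_singleton_iff A_f)
  then have msc: "msc U' {f}"
    unfolding min_self_contained_def by (auto dest: subset_singletonD)
  have "{v, f} \<inter> U = {}" using insert.prems(3)[of v f] p by blast
  moreover have "{v, f} \<inter> {v', f'} = {}" if "(v', f') \<in> Pr" for v' f'
    using insert.prems(2)[of v f v' f'] that insert.hyps(2) p by auto
  ultimately have "{v, f} \<inter> (U \<union> (\<Union>(v, f)\<in>Pr. {v, f})) = {}" by auto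
  then have "U' - {v, f} = U \<union> (\<Union>(v, f)\<in>Pr. {v, f})" unfolding U'_def p by auto
  then have rest: "U' - ({f} \<union> A U' {f}) = U \<union> (\<Union>(v, f)\<in>Pr. {v, f})"
    unfolding A_f by (simp add: insert_commute)
  have "co_core EC Fs (U \<union> (\<Union>(v, f)\<in>Pr. {v, f})) (cls \<union> (\<lambda>(v, f). {v, f}) ` Pr) eds"
    by (rule insert.IH) (use insert.prems in blast)+
  then have "co_core EC Fs U' (insert ({f} \<union> A U' {f}) (cls \<union> (\<lambda>(v, f). {v, f}) ` Pr))
      ({(w, {f} \<union> A U' {f}) |w. w \<in> adj EC {f} - A U' {f}} \<union> eds)"
    using co_core.co_step[OF _ msc refl] rest \<open>v \<in> U'\<close> by auto
  moreover have "{f} \<union> A U' {f} = {v, f}" "adj EC {f} - A U' {f} = {}" using A_f f(2) by auto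
  ultimately have "co_core EC Fs U' (insert {v, f} (cls \<union> (\<lambda>(v, f). {v, f}) ` Pr)) eds" by simp
  then show ?case unfolding U'_def p by simp
qed

end

section \<open>The causal ordering graph\<close>

locale coarse_decomposition =
  fixes V F :: "'a set" and E :: "('a \<times> 'a) set" and W :: "'a set" and M :: "('a \<times> 'a) set"
  assumes bip: "bip V F E" and W_subset: "W \<subseteq> V"
    and max_M: "max_matching (induced E ((V - W) \<union> F)) M"
begin

abbreviation "E' \<equiv> induced E ((V - W) \<union> F)"

definition "TI = alt_reach (V - W) F E' M (V - W)"
definition "TO = alt_reach (V - W) F E' M F"
definition "TC = ((V - W) \<union> F) - (TI \<union> TO)"

lemma E'_subset: "E' \<subseteq> (V - W) \<times> F"
  using bip unfolding bip_def induced_def by blast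

lemma disjoint_VF: "V \<inter> F = {}"
  using bip unfolding bip_def by blast

sublocale I: bipartite_max_matching "V - W" F E' M
  using bip E'_subset max_M unfolding bip_def by unfold_locales auto

sublocale O: bipartite_max_matching F "V - W" "E'\<inverse>" "M\<inverse>"
  using bip E'_subset max_matching_converse[OF max_M] unfolding bip_def by unfold_locales auto

lemma TI_eq: "TI = I.reach_P \<union> adj E' I.reach_P"
  using I.reach_eq unfolding TI_def I.reach_def .

lemma TO_eq: "TO = O.reach_P \<union> adj E' O.reach_P"
  using O.reach_eq unfolding TO_def O.reach_def alt_reach_converse[of "V - W"] by simp

lemma TC_disjoint: "TC \<inter> TI = {}" "TC \<inter> TO = {}"
  unfolding TC_def by auto

lemma TC_subset: "TC \<subseteq> (V - W) \<union> F"
  unfolding TC_def by blast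

lemma finite_TC: "finite TC"
  using TC_subset bip finite_subset unfolding bip_def by blast

text \<open>Unmatched vertices lie in \<open>TI\<close> or \<open>TO\<close>, and both sets are closed under taking
  \<open>M\<close>-partners.\<close>
lemma TC_partner:
  assumes "x \<in> TC"
  shows "\<exists>y\<in>TC. ein M x y"
proof -
  have x: "x \<notin> I.reach_P" "x \<notin> adj E' I.reach_P" "x \<notin> O.reach_P" "x \<notin> adj E' O.reach_P"
    using assms unfolding TC_def TI_eq TO_eq by auto
  have subsets: "I.reach_P \<subseteq> V - W" "adj E' I.reach_P \<subseteq> F" "O.reach_P \<subseteq> F" "adj E' O.reach_P \<subseteq> V - W"
    using I.reach_P_subset I.adj_reach_P_subset O.reach_P_subset O.adj_reach_P_subset by simp_all
  consider "x \<in> V - W" | "x \<in> F" using assms TC_subset by blast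
  then show ?thesis
  proof cases
    case 1
    then obtain f where f: "(x, f) \<in> M"
      using x(1) I.unmatched_in_reach_P I.matched_P_iff[OF I.matching_M] by blast
    then have "f \<in> F" "ein E' f x" using I.matching_edge[OF I.matching_M] I.M_subset unfolding ein_def by blast+
    moreover have "f \<notin> adj E' I.reach_P"
      using I.adj_reach_P_partner I.matching_snd_unique[OF I.matching_M f] x(1) by blast
    moreover have "f \<notin> O.reach_P" using x(4) \<open>ein E' f x\<close> unfolding adj_def by blast
    ultimately have "f \<in> TC" using subsets disjoint_VF unfolding TC_def TI_eq TO_eq by blast
    then show ?thesis using f unfolding ein_def by blast
  next
    case 2
    then obtain v where v: "(x, v) \<in> M\<inverse>"
      using x(3) O.unmatched_in_reach_P O.matched_P_iff[OF O.matching_M] by blast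
    then have "v \<in> V - W" "ein E' v x" using O.matching_edge[OF O.matching_M] I.M_subset unfolding ein_def by blast+
    moreover have "v \<notin> adj E' O.reach_P"
      using O.adj_reach_P_partner O.matching_snd_unique[OF O.matching_M v] x(3) by auto
    moreover have "v \<notin> I.reach_P" using x(2) \<open>ein E' v x\<close> unfolding adj_def by blast
    ultimately have "v \<in> TC" using subsets disjoint_VF unfolding TC_def TI_eq TO_eq by blast
    then show ?thesis using v unfolding ein_def by blast
  qed
qed

lemma TC_perfectly_matched: "perfectly_matched M (induced E TC) TC"
  unfolding perfectly_matched_def
proof (intro conjI allI impI ballI)
  fix x y z assume xy: "ein M x y" and xz: "ein M x z"
  have "x \<in> (V - W) \<union> F" using xy I.M_subset E'_subset unfolding ein_def by blast
  then show "y = z"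
  proof
    assume "x \<in> V - W"
    then have "(x, y) \<in> M" "(x, z) \<in> M" using xy xz I.ein_matching_P[OF I.matching_M] by blast+
    then show "y = z" using I.matching_fst_unique[OF I.matching_M] by blast
  next
    assume "x \<in> F"
    then have "(y, x) \<in> M" "(z, x) \<in> M" using xy xz I.ein_matching_Q[OF I.matching_M] by blast+
    then show "y = z" using I.matching_snd_unique[OF I.matching_M] by blast
  qed
next
  fix x assume "x \<in> TC"
  then obtain y where y: "y \<in> TC" "ein M x y" using TC_partner by blast
  then have "ein E x y" using I.M_subset unfolding ein_def induced_def by blast
  then show "\<exists>y\<in>TC. ein M x y \<and> ein (induced E TC) x y"
    using \<open>x \<in> TC\<close> y unfolding ein_induced by blast
qed

lemma ein_E'_imp_ein_E: "ein E' a b \<Longrightarrow> ein E a b"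
  unfolding ein_induced by blast

lemma components_TI_unbalanced: "K \<in> components E TI \<Longrightarrow> card (K \<inter> F) < card (K \<inter> (V - W))"
  using I.component_of_reach_unbalanced[OF ein_E'_imp_ein_E] unfolding TI_def I.reach_def by blast

lemma components_TO_unbalanced: "K \<in> components E TO \<Longrightarrow> card (K \<inter> (V - W)) < card (K \<inter> F)"
  using O.component_of_reach_unbalanced[of E] ein_E'_imp_ein_E
  unfolding TO_def O.reach_def alt_reach_converse[of "V - W"] by simp

definition CO_clusters :: "'a set set \<Rightarrow> 'a set set" where
  "CO_clusters clsC = clsC \<union> components E TI \<union> components E TO \<union> {{w} | w. w \<in> W}"

definition ordering_edge :: "'a \<Rightarrow> 'a \<Rightarrow> bool" where
  "ordering_edge v f \<longleftrightarrow> (v \<in> (TO \<union> TC) \<inter> V \<and> f \<in> TI \<inter> F) \<or> (v \<in> TO \<inter> V \<and> f \<in> TC \<inter> F)"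

definition CO_edges :: "'a set set \<Rightarrow> ('a \<times> 'a set) set \<Rightarrow> ('a \<times> 'a set) set" where
  "CO_edges clsC edsC = edsC
     \<union> {(v, C) | v f C. (v, f) \<in> E \<and> C \<in> CO_clusters clsC \<and> f \<in> C \<and> ordering_edge v f}
     \<union> {(w, C) | w f C. w \<in> W \<and> f \<in> adj E {w} \<and> C \<in> CO_clusters clsC \<and> f \<in> C}"

definition "CO_graph clsC edsC = (CO_clusters clsC, CO_edges clsC edsC)"

lemma CO_clusters_cases:
  assumes "C \<in> CO_clusters clsC"
  obtains "C \<in> clsC" | "C \<in> components E TI" | "C \<in> components E TO" | w where "w \<in> W" "C = {w}"
  using assms unfolding CO_clusters_def by blast

lemma balanced_cluster_in_core:
  assumes "C \<in> CO_clusters clsC" "C \<subseteq> (V - W) \<union> F" "card (C \<inter> F) = card (C \<inter> (V - W))"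
  shows "C \<in> clsC"
  using assms(1)
proof (cases rule: CO_clusters_cases)
  case 2
  then show ?thesis using components_TI_unbalanced assms(3) by force
next
  case 3
  then show ?thesis using components_TO_unbalanced assms(3) by force
next
  case (4 w)
  then show ?thesis using assms(2) W_subset disjoint_VF by blast
qed

lemma intervened_set_in_core:
  assumes "set fs \<union> set vs \<in> CO_clusters clsC" "set fs \<subseteq> F" "set vs \<subseteq> V - W"
    and "distinct fs" "distinct vs" "length fs = length vs"
  shows "set fs \<union> set vs \<in> clsC"
proof (rule balanced_cluster_in_core[OF assms(1)])
  show "set fs \<union> set vs \<subseteq> (V - W) \<union> F" using assms(2,3) by blast
  have "(set fs \<union> set vs) \<inter> F = set fs" "(set fs \<union> set vs) \<inter> (V - W) = set vs"
    using assms(2,3) disjoint_VF by blast+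
  then show "card ((set fs \<union> set vs) \<inter> F) = card ((set fs \<union> set vs) \<inter> (V - W))"
    using distinct_card assms(4-6) by metis
qed

end

lemma is_CO_obtain:
  assumes "is_CO V F E W G" "bip V F E" "W \<subseteq> V"
  obtains M clsC edsC where "coarse_decomposition V F E W M"
    "co_core (induced E (coarse_decomposition.TC V F E W M)) F (coarse_decomposition.TC V F E W M) clsC edsC"
    "G = coarse_decomposition.CO_graph V F E W M clsC edsC"
proof -
  obtain M TI' TO' TC' clsC edsC where M: "max_matching (induced E ((V - W) \<union> F)) M"
    and TI': "TI' = alt_reach (V - W) F (induced E ((V - W) \<union> F)) M (V - W)"
    and TO': "TO' = alt_reach (V - W) F (induced E ((V - W) \<union> F)) M F"
    and TC': "TC' = ((V - W) \<union> F) - (TI' \<union> TO')"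
    and core: "co_core (induced E TC') F TC' clsC edsC"
    and G: "fst G = clsC \<union> components E TI' \<union> components E TO' \<union> {{w} | w. w \<in> W}"
      "snd G = edsC
         \<union> {(v, C) | v f C. (v, f) \<in> E \<and> C \<in> fst G \<and> f \<in> C \<and>
               ((v \<in> (TO' \<union> TC') \<inter> V \<and> f \<in> TI' \<inter> F) \<or> (v \<in> TO' \<inter> V \<and> f \<in> TC' \<inter> F))}
         \<union> {(w, C) | w f C. w \<in> W \<and> f \<in> adj E {w} \<and> C \<in> fst G \<and> f \<in> C}"
    using assms(1) unfolding is_CO_def Let_def by (elim exE conjE) (rule that; assumption)
  interpret coarse_decomposition V F E W M using assms(2,3) M by unfold_locales
  have "TI' = TI" "TO' = TO" "TC' = TC" unfolding TI' TO' TC' TI_def TO_def TC_def by simp_all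
  show ?thesis
  proof (rule that)
    show "coarse_decomposition V F E W M" ..
    show "co_core (induced E TC) F TC clsC edsC" using core \<open>TC' = TC\<close> by simp
    have "fst G = CO_clusters clsC"
      using G(1) unfolding CO_clusters_def \<open>TI' = TI\<close> \<open>TO' = TO\<close> .
    moreover from this have "snd G = CO_edges clsC edsC"
      using G(2) unfolding CO_edges_def ordering_edge_def \<open>TI' = TI\<close> \<open>TO' = TO\<close> \<open>TC' = TC\<close> by simp
    ultimately show "G = CO_graph clsC edsC" unfolding CO_graph_def by (simp add: prod_eq_iff)
  qed
qed

section \<open>Perfect intervention\<close>

lemma zip_distinct_pairs:
  assumes "distinct xs" "distinct ys" "length xs = length ys"
    and "(x, y) \<in> set (zip xs ys)" "(x', y') \<in> set (zip xs ys)"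
  shows "x = x' \<longleftrightarrow> y = y'"
proof -
  obtain i j where "i < length xs" "j < length xs" "x = xs ! i" "y = ys ! i" "x' = xs ! j" "y' = ys ! j"
    using assms(3-5) by (auto simp: set_zip)
  then show ?thesis using assms(1-3) by (auto simp: nth_eq_iff_index_eq)
qed

locale bip_intervention =
  fixes V F :: "'a set" and E :: "('a \<times> 'a) set" and fs vs :: "'a list"
  assumes bip: "bip V F E" and fs_F: "set fs \<subseteq> F" and vs_V: "set vs \<subseteq> V"
    and length_eq: "length fs = length vs" and distinct_fs: "distinct fs"
begin

abbreviation "Ed \<equiv> do_bip E fs vs"

lemma mem_do_bip: "(a, b) \<in> Ed \<longleftrightarrow> (a, b) \<in> E \<and> b \<notin> set fs \<or> (a, b) \<in> set (zip vs fs)"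
  unfolding do_bip_def set_zip using length_eq by auto

lemma do_bip_subset: "Ed \<subseteq> V \<times> F"
proof
  fix e assume "e \<in> Ed"
  moreover obtain a b where "e = (a, b)" by force
  ultimately show "e \<in> V \<times> F"
    using bip fs_F vs_V unfolding bip_def by (auto simp: mem_do_bip dest: set_zip_leftD set_zip_rightD)
qed

lemma bip_do_bip: "bip V F Ed"
  using bip do_bip_subset unfolding bip_def by blast

lemma ein_do_bip_V:
  assumes "z \<in> V" "z \<notin> set vs"
  shows "ein Ed z y \<longleftrightarrow> ein E z y \<and> y \<notin> set fs"
proof -
  have "(y, z) \<notin> Ed" "(y, z) \<notin> E" using do_bip_subset bip assms(1) unfolding bip_def by auto
  moreover have "(z, y) \<notin> set (zip vs fs)" using assms(2) by (auto dest: set_zip_leftD)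
  ultimately show ?thesis unfolding ein_def mem_do_bip by blast
qed

lemma ein_do_bip_F:
  assumes "f \<in> F" "f \<notin> set fs"
  shows "ein Ed f y \<longleftrightarrow> ein E f y"
proof -
  have "(f, y) \<notin> Ed" "(f, y) \<notin> E" using do_bip_subset bip assms(1) unfolding bip_def by auto
  moreover have "(y, f) \<notin> set (zip vs fs)" using assms(2) by (auto dest: set_zip_rightD)
  ultimately show ?thesis using assms(2) unfolding ein_def mem_do_bip by blast
qed

lemma ein_do_bip_intervened:
  assumes "(v, f) \<in> set (zip vs fs)"
  shows "ein Ed f y \<longleftrightarrow> y = v"
proof -
  obtain i where i: "i < length fs" "v = vs ! i" "f = fs ! i"
    using assms length_eq by (auto simp: set_zip)
  have "(y, f) \<in> set (zip vs fs) \<longleftrightarrow> y = v"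
    using i distinct_fs length_eq by (auto simp: set_zip nth_eq_iff_index_eq)
  moreover have "(f, y) \<notin> Ed"
    using do_bip_subset bip i fs_F unfolding bip_def by (auto dest!: nth_mem[of i fs])
  ultimately show ?thesis using i unfolding ein_def mem_do_bip by auto
qed

lemma induced_do_bip: "T \<inter> (set fs \<union> set vs) = {} \<Longrightarrow> induced Ed T = induced E T"
  unfolding induced_def using mem_do_bip by (auto dest: set_zip_leftD)

lemma adj_do_bip_V:
  assumes "Z \<subseteq> V" "Z \<inter> set vs = {}"
  shows "adj (induced Ed U) Z = adj (induced E U) Z - set fs"
  using ein_do_bip_V assms unfolding adj_induced by blast

lemma adj_do_bip_F:
  assumes "Z \<subseteq> F" "Z \<inter> set fs = {}"
  shows "adj (induced Ed U) Z = adj (induced E U) Z"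
  using ein_do_bip_F assms unfolding adj_induced by blast

end

locale perfect_intervention =
  coarse_decomposition V F E W M + bip_intervention V F E fs vs
  for V F :: "'a set" and E :: "('a \<times> 'a) set" and W :: "'a set" and M :: "('a \<times> 'a) set"
    and fs vs :: "'a list" +
  fixes clsC :: "'a set set" and edsC :: "('a \<times> 'a set) set"
  assumes core: "co_core (induced E TC) F TC clsC edsC"
    and vs_endogenous: "set vs \<inter> W = {}" and distinct_vs: "distinct vs"
    and intervened_cluster: "set fs \<union> set vs \<in> clsC"
begin

abbreviation "S \<equiv> set fs \<union> set vs"
abbreviation "do_pairs \<equiv> set (zip vs fs)"
abbreviation "Ed' \<equiv> induced Ed ((V - W) \<union> F)"

sublocale core_graph "induced E TC" F V
  using bip unfolding bip_def induced_def by unfold_locales auto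

sublocale Ed: core_graph "induced Ed TC" F V
  using bip_do_bip unfolding bip_def induced_def by unfold_locales auto

lemma S_subset_TC: "S \<subseteq> TC"
  using co_core_clusters(1)[OF core intervened_cluster] by blast

lemma S_disjoint: "S \<inter> TI = {}" "S \<inter> TO = {}"
  using S_subset_TC TC_disjoint by blast+

lemma do_pairs_mem: "(v, f) \<in> do_pairs \<Longrightarrow> v \<in> set vs \<and> f \<in> set fs"
  by (auto dest: set_zip_leftD set_zip_rightD)

lemma S_eq_pairs: "(\<Union>(v, f)\<in>do_pairs. {v, f}) = S"
proof (intro equalityI subsetI)
  fix x assume "x \<in> S"
  then obtain i where i: "i < length fs" "x = fs ! i \<or> x = vs ! i"
    using length_eq by (auto simp: in_set_conv_nth)
  then have "(vs ! i, fs ! i) \<in> do_pairs" using length_eq by (auto simp: set_zip)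
  then show "x \<in> (\<Union>(v, f)\<in>do_pairs. {v, f})" using i by blast
qed (auto dest: do_pairs_mem)

lemma do_pairs_disjoint:
  assumes "(v, f) \<in> do_pairs" "(v', f') \<in> do_pairs" "(v, f) \<noteq> (v', f')"
  shows "{v, f} \<inter> {v', f'} = {}"
proof -
  have "v \<noteq> v'" "f \<noteq> f'"
    using zip_distinct_pairs[OF distinct_vs distinct_fs length_eq[symmetric] assms(1,2)] assms(3) by auto
  moreover have "v \<in> V" "v' \<in> V" "f \<in> F" "f' \<in> F" using do_pairs_mem assms(1,2) fs_F vs_V by blast+
  ultimately show ?thesis using disjoint_VF by blast
qed

lemma S_perfectly_matched: "perfectly_matched M (induced E TC) S"
  using co_core_perfectly_matched[OF core _ TC_perfectly_matched intervened_cluster]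
    finite_subset[OF TC_subset] bip unfolding bip_def by blast

lemma S_partner:
  shows "v \<in> set vs \<Longrightarrow> \<exists>f\<in>set fs. (v, f) \<in> M" and "f \<in> set fs \<Longrightarrow> \<exists>v\<in>set vs. (v, f) \<in> M"
proof -
  have S_V: "S \<inter> (V - W) = set vs" and S_F: "S \<inter> F = set fs"
    using fs_F vs_V vs_endogenous disjoint_VF by blast+
  have partner: "\<exists>y\<in>S. ein M x y" if "x \<in> S" for x
    using S_perfectly_matched that unfolding perfectly_matched_def by blast
  show "\<exists>f\<in>set fs. (v, f) \<in> M" if v_mem: "v \<in> set vs"
  proof -
    obtain y where y: "y \<in> S" "ein M v y" using partner[of v] v_mem by blast
    have "v \<in> V - W" using v_mem S_V by blast
    then have "(v, y) \<in> M" using I.ein_matching_P[OF I.matching_M y(2)] by blast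
    moreover have "y \<in> F" using I.matching_edge[OF I.matching_M calculation] by blast
    ultimately show ?thesis using y(1) S_F by blast
  qed
  show "\<exists>v\<in>set vs. (v, f) \<in> M" if f_mem: "f \<in> set fs"
  proof -
    obtain y where y: "y \<in> S" "ein M f y" using partner[of f] f_mem by blast
    have "f \<in> F" using f_mem S_F by blast
    then have "(y, f) \<in> M" using I.ein_matching_Q[OF I.matching_M y(2)] by blast
    moreover have "y \<in> V - W" using I.matching_edge[OF I.matching_M calculation] by blast
    ultimately show ?thesis using y(1) S_V by blast
  qed
qed

definition "M_do = {e \<in> M. snd e \<notin> set fs} \<union> do_pairs"

lemma M_do_subset: "M_do \<subseteq> Ed'"
proof
  fix e assume "e \<in> M_do"
  moreover obtain a b where e: "e = (a, b)" by force
  ultimately consider "(a, b) \<in> M" "b \<notin> set fs" | "(a, b) \<in> do_pairs" unfolding M_do_def by auto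
  then show "e \<in> Ed'"
  proof cases
    case 1
    then show ?thesis using I.M_subset unfolding e induced_def by (auto simp: mem_do_bip)
  next
    case 2
    then show ?thesis
      using do_pairs_mem[OF 2] fs_F vs_V vs_endogenous unfolding e induced_def by (auto simp: mem_do_bip)
  qed
qed

lemma matching_M_do: "matching Ed' M_do"
  unfolding matching_iff
proof (rule conjI[OF M_do_subset], intro allI impI)
  fix a b c d assume ab: "(a, b) \<in> M_do" and cd: "(c, d) \<in> M_do" and eq: "a = c \<or> b = d"
  have old_new: False if "(a', b') \<in> M" "b' \<notin> set fs" "(c', d') \<in> do_pairs" "a' = c' \<or> b' = d'" for a' b' c' d'
  proof -
    have cd': "c' \<in> set vs" "d' \<in> set fs" using do_pairs_mem[OF that(3)] by blast+
    then obtain f where "f \<in> set fs" "(c', f) \<in> M" using S_partner(1) by blast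
    then show False using that cd'(2) I.matching_fst_unique[OF I.matching_M] by blast
  qed
  have new_new: "a' = c' \<longleftrightarrow> b' = d'" if "(a', b') \<in> do_pairs" "(c', d') \<in> do_pairs" for a' b' c' d'
    using zip_distinct_pairs[OF distinct_vs distinct_fs length_eq[symmetric] that] .
  consider "(a, b) \<in> M" "b \<notin> set fs" "(c, d) \<in> M" "d \<notin> set fs" | "(a, b) \<in> M" "b \<notin> set fs" "(c, d) \<in> do_pairs"
    | "(a, b) \<in> do_pairs" "(c, d) \<in> M" "d \<notin> set fs" | "(a, b) \<in> do_pairs" "(c, d) \<in> do_pairs"
  proof -
    have "(a, b) \<in> M \<and> b \<notin> set fs \<or> (a, b) \<in> do_pairs" "(c, d) \<in> M \<and> d \<notin> set fs \<or> (c, d) \<in> do_pairs"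
      using ab cd unfolding M_do_def by auto
    then show ?thesis using that by blast
  qed
  then show "a = c \<and> b = d"
  proof cases
    case 1
    then show ?thesis using I.matching_M eq unfolding matching_iff by blast
  next
    case 2
    then show ?thesis using old_new eq by blast
  next
    case 3
    then show ?thesis using old_new eq by blast
  next
    case 4
    then show ?thesis using new_new eq by blast
  qed
qed

lemma card_M_do: "card M_do = card M"
proof -
  have fin: "finite M" using I.finite_matching[OF I.matching_M] .
  have "inj_on snd {e \<in> M. snd e \<in> set fs}" using I.matching_M unfolding matching_def inj_on_def by blast
  moreover have "snd ` {e \<in> M. snd e \<in> set fs} = set fs"
  proof (intro equalityI subsetI)
    fix f assume "f \<in> set fs"
    then obtain v where "(v, f) \<in> M" using S_partner(2) by blast
    then show "f \<in> snd ` {e \<in> M. snd e \<in> set fs}" using \<open>f \<in> set fs\<close> by force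
  qed auto
  ultimately have "card {e \<in> M. snd e \<in> set fs} = length fs"
    using card_image distinct_card[OF distinct_fs] by metis
  moreover have "card do_pairs = length (zip vs fs)" by (rule distinct_card[OF distinct_zipI1[OF distinct_vs]])
  then have "card do_pairs = length fs" using length_eq by simp
  moreover have "card M = card {e \<in> M. snd e \<notin> set fs} + card {e \<in> M. snd e \<in> set fs}"
    using fin by (subst card_Un_disjoint[symmetric]) (auto intro: arg_cong[where f = card])
  moreover have "card M_do = card {e \<in> M. snd e \<notin> set fs} + card do_pairs"
    unfolding M_do_def using fin do_pairs_mem by (intro card_Un_disjoint) auto
  ultimately show ?thesis by linarith
qed

lemma S_nonempty: "S \<noteq> {}"
  using co_core_clusters(1)[OF core intervened_cluster] by blast

lemma cluster_meets_S:
  assumes "C \<in> CO_clusters clsC" "C \<inter> S \<noteq> {}"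
  shows "C = S"
  using assms(1)
proof (cases rule: CO_clusters_cases)
  case 1
  then show ?thesis using co_core_clusters(3)[OF core 1 intervened_cluster] assms(2) by blast
next
  case 2
  then show ?thesis using components_subset[OF 2] S_disjoint assms(2) by blast
next
  case 3
  then show ?thesis using components_subset[OF 3] S_disjoint assms(2) by blast
next
  case (4 w)
  then show ?thesis using assms(2) S_subset_TC TC_subset W_subset disjoint_VF by blast
qed

lemma S_not_in_components: "S \<notin> components E TI" "S \<notin> components E TO"
proof -
  obtain x where "x \<in> S" using S_nonempty by (meson ex_in_conv)
  then have "\<not> S \<subseteq> TI" "\<not> S \<subseteq> TO" using S_disjoint by auto
  then show "S \<notin> components E TI" "S \<notin> components E TO" using components_subset by blast+
qed

lemma S_not_singleton: "S \<notin> {{w} | w. w \<in> W}"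
proof
  assume "S \<in> {{w} | w. w \<in> W}"
  then obtain w where "w \<in> W" "w \<in> S" by blast
  then show False using S_subset_TC TC_subset W_subset disjoint_VF by blast
qed

end

locale intervened_causal_ordering = perfect_intervention +
  fixes M2 :: "('a \<times> 'a) set" and cls2 :: "'a set set" and eds2 :: "('a \<times> 'a set) set"
  assumes decomposition2: "coarse_decomposition V F Ed W M2"
    and core2: "co_core (induced Ed (coarse_decomposition.TC V F Ed W M2)) F
      (coarse_decomposition.TC V F Ed W M2) cls2 eds2"
begin

sublocale D2: coarse_decomposition V F Ed W M2
  by (rule decomposition2)

lemma matching_number_le: "card M \<le> card M2"
  using D2.max_M matching_M_do card_M_do unfolding max_matching_def by metis

lemma adj_do_bip_TI: "Z \<subseteq> I.reach_P \<Longrightarrow> adj Ed' Z = adj E' Z"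
proof -
  assume Z: "Z \<subseteq> I.reach_P"
  then have "Z \<subseteq> V" "Z \<inter> set vs = {}" using I.reach_P_subset S_disjoint(1) TI_eq by blast+
  moreover have "adj E' Z \<inter> set fs = {}" using adj_mono[OF Z] S_disjoint(1) TI_eq by blast
  ultimately show ?thesis using adj_do_bip_V by blast
qed

lemma adj_do_bip_TO: "Z \<subseteq> O.reach_P \<Longrightarrow> adj (Ed'\<inverse>) Z = adj (E'\<inverse>) Z"
proof -
  assume Z: "Z \<subseteq> O.reach_P"
  then have "Z \<subseteq> F" "Z \<inter> set fs = {}" using O.reach_P_subset S_disjoint(2) TO_eq by blast+
  then show ?thesis using adj_do_bip_F by simp
qed

lemma TI_unchanged: "D2.TI = TI"
proof -
  have "D2.I.reach_P = I.reach_P"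
    using reach_P_stable[OF I.bipartite_max_matching_axioms D2.I.bipartite_max_matching_axioms
        matching_number_le adj_do_bip_TI] .
  then show ?thesis using D2.TI_eq TI_eq adj_do_bip_TI[OF order_refl] by simp
qed

lemma TO_unchanged: "D2.TO = TO"
proof -
  have "card (M\<inverse>) \<le> card (M2\<inverse>)" using matching_number_le by simp
  then have "D2.O.reach_P = O.reach_P"
    using reach_P_stable[OF O.bipartite_max_matching_axioms D2.O.bipartite_max_matching_axioms
        _ adj_do_bip_TO] by blast
  then show ?thesis using D2.TO_eq TO_eq adj_do_bip_TO[OF order_refl] by simp
qed

lemma TC_unchanged: "D2.TC = TC"
  unfolding D2.TC_def TC_def TI_unchanged TO_unchanged ..

lemma intervened_core:
  "cls2 = (clsC - {S}) \<union> (\<lambda>(v, f). {v, f}) ` do_pairs \<and> eds2 = {x \<in> edsC. snd x \<noteq> S}"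
proof -
  have "co_core (induced E TC) F (TC - S) (clsC - {S}) {x \<in> edsC. snd x \<noteq> S}"
    by (rule co_core_remove_cluster[OF core intervened_cluster])
  moreover have "\<forall>x\<in>F \<inter> (TC - S). \<forall>y. ein (induced E TC) x y = ein (induced Ed TC) x y"
    using ein_do_bip_F unfolding ein_induced by auto
  ultimately have rest: "co_core (induced Ed TC) F (TC - S) (clsC - {S}) {x \<in> edsC. snd x \<noteq> S}"
    by (rule co_core_cong)
  have "co_core (induced Ed TC) F ((TC - S) \<union> (\<Union>(v, f)\<in>do_pairs. {v, f}))
      ((clsC - {S}) \<union> (\<lambda>(v, f). {v, f}) ` do_pairs) {x \<in> edsC. snd x \<noteq> S}"
  proof (rule Ed.co_core_add_pairs[OF rest finite_set])
    fix v f assume vf: "(v, f) \<in> do_pairs"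
    then have "v \<in> TC" "f \<in> TC" "f \<in> F" using do_pairs_mem S_subset_TC fs_F by blast+
    then show "f \<in> F \<and> adj (induced Ed TC) {f} = {v}"
      using ein_do_bip_intervened[OF vf] unfolding adj_induced by auto
  next
    fix v f assume "(v, f) \<in> do_pairs"
    then show "{v, f} \<inter> (TC - S) = {}" using do_pairs_mem by blast
  qed (rule do_pairs_disjoint)
  moreover have "(TC - S) \<union> (\<Union>(v, f)\<in>do_pairs. {v, f}) = TC" using S_eq_pairs S_subset_TC by blast
  moreover have "Ed.hall TC"
    using Ed.hall_if_perfectly_matched[OF finite_TC] D2.TC_perfectly_matched TC_unchanged by simp
  ultimately show ?thesis using Ed.co_core_unique finite_TC core2 TC_unchanged by simp
qed

lemma pair_clusters_eq: "(\<lambda>(v, f). {v, f}) ` do_pairs = {{vs ! i, fs ! i} | i. i < length fs}"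
  using length_eq by (auto simp: set_zip)

lemma components_do_bip: "components Ed TI = components E TI" "components Ed TO = components E TO"
proof -
  have "TI \<inter> S = {}" "TO \<inter> S = {}" using S_disjoint by (simp_all add: Int_commute)
  then show "components Ed TI = components E TI" "components Ed TO = components E TO"
    unfolding components_def using induced_do_bip by simp_all
qed

lemma intervened_clusters: "D2.CO_clusters cls2 = (CO_clusters clsC - {S}) \<union> (\<lambda>(v, f). {v, f}) ` do_pairs"
  using intervened_core S_not_in_components S_not_singleton
  unfolding D2.CO_clusters_def CO_clusters_def TI_unchanged TO_unchanged components_do_bip by auto

lemma clusters_agree:
  assumes "f \<notin> S"
  shows "C \<in> D2.CO_clusters cls2 \<and> f \<in> C \<longleftrightarrow> C \<in> CO_clusters clsC \<and> f \<in> C"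
  using assms do_pairs_mem unfolding intervened_clusters by fastforce

lemma cluster_member_not_in_S: "C \<in> CO_clusters clsC \<Longrightarrow> f \<in> C \<Longrightarrow> C \<noteq> S \<Longrightarrow> f \<notin> S"
  using cluster_meets_S by blast

lemma ordering_edge_unchanged: "D2.ordering_edge = ordering_edge"
  unfolding D2.ordering_edge_def ordering_edge_def TI_unchanged TO_unchanged TC_unchanged ..

lemma intervened_ordering_edges:
  "(\<exists>f. (a, f) \<in> Ed \<and> C \<in> D2.CO_clusters cls2 \<and> f \<in> C \<and> ordering_edge a f) \<longleftrightarrow>
   (\<exists>f. (a, f) \<in> E \<and> C \<in> CO_clusters clsC \<and> f \<in> C \<and> ordering_edge a f) \<and> C \<noteq> S"
proof
  assume "\<exists>f. (a, f) \<in> Ed \<and> C \<in> D2.CO_clusters cls2 \<and> f \<in> C \<and> ordering_edge a f"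
  then obtain f where f: "(a, f) \<in> Ed" "C \<in> D2.CO_clusters cls2" "f \<in> C" "ordering_edge a f" by blast
  have "f \<notin> set fs"
  proof
    assume "f \<in> set fs"
    then have "(a, f) \<in> do_pairs" using f(1) mem_do_bip by blast
    then have "a \<in> TC" "f \<in> TC" using do_pairs_mem S_subset_TC by blast+
    then show False using f(4) TC_disjoint unfolding ordering_edge_def by blast
  qed
  moreover have "f \<in> F" using f(4) unfolding ordering_edge_def by blast
  ultimately have "f \<notin> S" using vs_V disjoint_VF by blast
  have "(a, f) \<in> E" using f(1) \<open>f \<notin> set fs\<close> mem_do_bip do_pairs_mem[of a f] by blast
  then show "(\<exists>f. (a, f) \<in> E \<and> C \<in> CO_clusters clsC \<and> f \<in> C \<and> ordering_edge a f) \<and> C \<noteq> S"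
    using clusters_agree[OF \<open>f \<notin> S\<close>] f \<open>f \<notin> S\<close> by blast
next
  assume "(\<exists>f. (a, f) \<in> E \<and> C \<in> CO_clusters clsC \<and> f \<in> C \<and> ordering_edge a f) \<and> C \<noteq> S"
  then obtain f where f: "(a, f) \<in> E" "C \<in> CO_clusters clsC" "f \<in> C" "ordering_edge a f" "C \<noteq> S"
    by blast
  then have "f \<notin> S" using cluster_member_not_in_S by blast
  then have "(a, f) \<in> Ed" using f(1) mem_do_bip by blast
  then show "\<exists>f. (a, f) \<in> Ed \<and> C \<in> D2.CO_clusters cls2 \<and> f \<in> C \<and> ordering_edge a f"
    using clusters_agree[OF \<open>f \<notin> S\<close>] f by blast
qed

lemma intervened_exogenous_edges:
  "(\<exists>f. a \<in> W \<and> f \<in> adj Ed {a} \<and> C \<in> D2.CO_clusters cls2 \<and> f \<in> C) \<longleftrightarrow>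
   (\<exists>f. a \<in> W \<and> f \<in> adj E {a} \<and> C \<in> CO_clusters clsC \<and> f \<in> C) \<and> C \<noteq> S"
proof (cases "a \<in> W")
  case True
  then have a: "a \<in> V" "a \<notin> set vs" using W_subset vs_endogenous by blast+
  have "adj E {a} \<subseteq> F" using a(1) bip disjoint_VF unfolding bip_def adj_def ein_def by blast
  then have adj_a: "f \<in> adj Ed {a} \<longleftrightarrow> f \<in> adj E {a} \<and> f \<notin> S" for f
    using ein_do_bip_V[OF a] vs_V disjoint_VF unfolding adj_def by blast
  show ?thesis
  proof
    assume "\<exists>f. a \<in> W \<and> f \<in> adj Ed {a} \<and> C \<in> D2.CO_clusters cls2 \<and> f \<in> C"
    then obtain f where "f \<in> adj E {a}" "f \<notin> S" "C \<in> D2.CO_clusters cls2" "f \<in> C"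
      using adj_a by blast
    then show "(\<exists>f. a \<in> W \<and> f \<in> adj E {a} \<and> C \<in> CO_clusters clsC \<and> f \<in> C) \<and> C \<noteq> S"
      using clusters_agree[of f C] True by blast
  next
    assume "(\<exists>f. a \<in> W \<and> f \<in> adj E {a} \<and> C \<in> CO_clusters clsC \<and> f \<in> C) \<and> C \<noteq> S"
    then obtain f where "f \<in> adj E {a}" "C \<in> CO_clusters clsC" "f \<in> C" "C \<noteq> S" by blast
    moreover from this have "f \<notin> S" using cluster_member_not_in_S by blast
    ultimately show "\<exists>f. a \<in> W \<and> f \<in> adj Ed {a} \<and> C \<in> D2.CO_clusters cls2 \<and> f \<in> C"
      using adj_a clusters_agree[of f C] True by blast
  qed
qed simp

lemma intervened_edges: "D2.CO_edges cls2 eds2 = {(x, T) \<in> CO_edges clsC edsC. T \<noteq> S}"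
proof -
  have "(a, C) \<in> D2.CO_edges cls2 eds2 \<longleftrightarrow> (a, C) \<in> CO_edges clsC edsC \<and> C \<noteq> S" for a C
  proof -
    have "(a, C) \<in> eds2 \<longleftrightarrow> (a, C) \<in> edsC \<and> C \<noteq> S" using intervened_core by simp
    then show ?thesis
      using intervened_ordering_edges[of a C] intervened_exogenous_edges[of a C]
      unfolding D2.CO_edges_def CO_edges_def ordering_edge_unchanged by blast
  qed
  then show ?thesis by auto
qed

lemma intervened_CO_graph: "D2.CO_graph cls2 eds2 = do_CO (CO_graph clsC edsC) fs vs"
  unfolding do_CO_def CO_graph_def D2.CO_graph_def using intervened_clusters intervened_edges pair_clusters_eq by simp

end

theorem proposition25:
  fixes V F W SF SV :: "'a set" and E :: "('a \<times> 'a) set"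
    and G G' :: "'a set set \<times> ('a \<times> 'a set) set"
    and fs vs :: "'a list"
  assumes "bip V F E" and "W \<subseteq> V"
    and "is_CO V F E W G"
    and "SF \<subseteq> F" and "SV \<subseteq> V - W" and "SF \<union> SV \<in> fst G"
    and "distinct fs" and "distinct vs" and "length fs = length vs"
    and "set fs = SF" and "set vs = SV"
    and "is_CO V F (do_bip E fs vs) W G'"
  shows "G' = do_CO G fs vs"
proof -
  obtain M clsC edsC where decomposition: "coarse_decomposition V F E W M"
    and core: "co_core (induced E (coarse_decomposition.TC V F E W M)) F
      (coarse_decomposition.TC V F E W M) clsC edsC"
    and G: "G = coarse_decomposition.CO_graph V F E W M clsC edsC"
    using is_CO_obtain[OF assms(3,1,2)] .
  interpret coarse_decomposition V F E W M by (rule decomposition)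
  have "set fs \<union> set vs \<in> clsC"
    using intervened_set_in_core assms(4-11) G unfolding CO_graph_def by auto
  then interpret perfect_intervention V F E W M fs vs clsC edsC
    using assms(1,4,5,7-11) core by unfold_locales auto
  obtain M2 cls2 eds2 where decomposition2: "coarse_decomposition V F Ed W M2"
    and core2: "co_core (induced Ed (coarse_decomposition.TC V F Ed W M2)) F
      (coarse_decomposition.TC V F Ed W M2) cls2 eds2"
    and G': "G' = coarse_decomposition.CO_graph V F Ed W M2 cls2 eds2"
    using is_CO_obtain[OF assms(12) bip_do_bip assms(2)] .
  interpret intervened_causal_ordering V F E W M fs vs clsC edsC M2 cls2 eds2
    by unfold_locales (use decomposition2 core2 in \<open>auto simp: coarse_decomposition_def\<close>)
  show ?thesis using intervened_CO_graph G G' by simp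
qed

end
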